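(* Let $n\ge3$. For every $\Gamma_1=([n],Q_1),\Gamma_2=([n],Q_2)\in\mathcal{S}_n$, $$d_4(\Gamma_1,\Gamma_2)=|Q_1\Delta Q_2|-\frac{2}{n+1}A(\Gamma_1\cup\Gamma_2)=|Q_1\Delta Q_2|-\frac{2}{n+1}\bigl(|Q_1\Delta Q_2|-\Lambda_{\ge2}\bigr).$$
   Context: For $n\ge1$ let $[n]=\{1,\dots,n\}$. A contact structure of length $n$ is a simple undirected graph $\Gamma=([n],Q)$ (no self-loops, no multiple edges) such that $\{i,i+1\}\notin Q$ for every $i$; its edges are called contacts, written $i\cdot j$. It is an RNA secondary structure if every node belongs to at most one contact; $\mathcal{S}_n$ is the set of these. $\Gamma_1\cup\Gamma_2=([n],Q_1\cup Q_2)$. $A(\Gamma)$ is the number of unordered pairs $\{i\cdot j,j\cdot k\}$ of distinct contacts of $\Gamma$ sharing a node ($i\neq k$). Orbits: for $\Gamma_1,\Gamma_2\in\mathcal{S}_n$ the orbits are the vertex sets of the connected components of the graph $([n],Q_1\cup Q_2)$; the length of an orbit is its number of nodes. An orbit is cyclic if either it has 2 nodes and its contact lies in $Q_1\cap Q_2$, or it has $m\ge3$ nodes that can be listed $i_1,\dots,i_m$ with $i_1\cdot i_2,\dots,i_{m-1}\cdot i_m,i_m\cdot i_1\in Q_1\cup Q_2$; otherwise it is linear. $\Lambda^{(m)}$ is the number of linear orbits of length $m$, $\Lambda_{\ge k}=\sum_{m\ge k}\Lambda^{(m)}$. $\mathbb{F}_2=\mathbb{Z}/2\mathbb{Z}$;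 the edge ideal $I_\Gamma$ is the ideal of $\mathbb{F}_2[x_1,\dots,x_n]$ generated by $\{x_ix_j:i\cdot j\in Q\}$. For $m\ge3$, $R_{n,m}=\mathbb{F}_2[x_1,\dots,x_n]/\langle\text{all monomials of total degree }m\rangle$, $\pi_m$ the quotient map, $d'_m(\Gamma_1,\Gamma_2)=\log_2\bigl|(\pi_m(I_{\Gamma_1})+\pi_m(I_{\Gamma_2}))/(\pi_m(I_{\Gamma_1})\cap\pi_m(I_{\Gamma_2}))\bigr|$ (cardinality of a quotient of additive groups), and $d_m=d'_m/\binom{n+m-3}{n}$; $d_4=d'_4/(n+1)$. $\Delta$ denotes symmetric difference. *)

theory Defs
  imports Complex_Main "HOL-Library.Poly_Mapping" "HOL-Library.Z2" "HOL-Library.Set_Algebras"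
begin

definition contact_structure :: "nat \<Rightarrow> nat set set \<Rightarrow> bool" where
  "contact_structure n Q \<longleftrightarrow>
     (\<forall>e\<in>Q. e \<subseteq> {1..n} \<and> card e = 2) \<and> (\<forall>i. {i, i+1} \<notin> Q)"

definition secondary_structure :: "nat \<Rightarrow> nat set set \<Rightarrow> bool" where
  "secondary_structure n Q \<longleftrightarrow> contact_structure n Q \<and>
     (\<forall>e\<in>Q. \<forall>f\<in>Q. e \<inter> f \<noteq> {} \<longrightarrow> e = f)"

definition symdiff :: "'a set \<Rightarrow> 'a set \<Rightarrow> 'a set" where
  "symdiff A B = (A - B) \<union> (B - A)"

definition A_count :: "nat set set \<Rightarrow> nat" where
  "A_count Q = card {{e, f} | e f. e \<in> Q \<and> f \<in> Q \<and> e \<noteq> f \<and> e \<inter> f \<noteq> {}}"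

definition adj_rel :: "nat set set \<Rightarrow> (nat \<times> nat) set" where
  "adj_rel Q = {(i, j). {i, j} \<in> Q}"

definition orbits :: "nat \<Rightarrow> nat set set \<Rightarrow> nat set set \<Rightarrow> nat set set" where
  "orbits n Q1 Q2 =
     {{j \<in> {1..n}. (i, j) \<in> (adj_rel (Q1 \<union> Q2))\<^sup>*} | i. i \<in> {1..n}}"

definition cyclic_orbit :: "nat set set \<Rightarrow> nat set set \<Rightarrow> nat set \<Rightarrow> bool" where
  "cyclic_orbit Q1 Q2 Ob \<longleftrightarrow>
     (card Ob = 2 \<and> Ob \<in> Q1 \<inter> Q2) \<or>
     (card Ob \<ge> 3 \<and> (\<exists>xs. distinct xs \<and> set xs = Ob \<and>
        (\<forall>k < length xs. {xs ! k, xs ! ((k + 1) mod length xs)} \<in> Q1 \<union> Q2)))"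

definition Lambda :: "nat \<Rightarrow> nat set set \<Rightarrow> nat set set \<Rightarrow> nat \<Rightarrow> nat" where
  "Lambda n Q1 Q2 m = card {Ob \<in> orbits n Q1 Q2. card Ob = m \<and> \<not> cyclic_orbit Q1 Q2 Ob}"

definition Lambda_ge :: "nat \<Rightarrow> nat set set \<Rightarrow> nat set set \<Rightarrow> nat \<Rightarrow> nat" where
  "Lambda_ge n Q1 Q2 k = (\<Sum>m\<in>{k..n}. Lambda n Q1 Q2 m)"

text \<open>Polynomials in countably many variables over F_2 = bit; monomials are
  exponent vectors (finitely supported nat-valued functions). F_2[x_1..x_n] is the subring of those
  involving only the variables 1..n.\<close>
type_synonym f2poly = "(nat \<Rightarrow>\<^sub>0 nat) \<Rightarrow>\<^sub>0 bit"

definition polys :: "nat \<Rightarrow> f2poly set" where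
  "polys n = {p. \<forall>mon \<in> Poly_Mapping.keys p. Poly_Mapping.keys mon \<subseteq> {1..n}}"

inductive_set ideal_gen :: "nat \<Rightarrow> f2poly set \<Rightarrow> f2poly set" for n G where
  zero: "0 \<in> ideal_gen n G"
| add: "a \<in> ideal_gen n G \<Longrightarrow> b \<in> ideal_gen n G \<Longrightarrow> a + b \<in> ideal_gen n G"
| mult: "r \<in> polys n \<Longrightarrow> g \<in> G \<Longrightarrow> r * g \<in> ideal_gen n G"

definition var_mon :: "nat \<Rightarrow> f2poly" where
  "var_mon i = Poly_Mapping.single (Poly_Mapping.single i 1) 1"

definition edge_ideal :: "nat \<Rightarrow> nat set set \<Rightarrow> f2poly set" where
  "edge_ideal n Q = ideal_gen n {var_mon i * var_mon j | i j. {i, j} \<in> Q}"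

definition total_degree :: "(nat \<Rightarrow>\<^sub>0 nat) \<Rightarrow> nat" where
  "total_degree mon = (\<Sum>i\<in>Poly_Mapping.keys mon. Poly_Mapping.lookup mon i)"

definition deg_ideal :: "nat \<Rightarrow> nat \<Rightarrow> f2poly set" where
  "deg_ideal n m = ideal_gen n
     {Poly_Mapping.single mon 1 | mon. Poly_Mapping.keys mon \<subseteq> {1..n} \<and> total_degree mon = m}"

text \<open>Quotient map pi_m : F_2[x_1..x_n] \<rightarrow> R_{n,m}; elements of R_{n,m} are cosets.
  Addition of cosets is the set addition from Set_Algebras.\<close>
definition pi_map :: "nat \<Rightarrow> nat \<Rightarrow> f2poly \<Rightarrow> f2poly set" where
  "pi_map n m p = p +o deg_ideal n m"

definition quot_card :: "'a::plus set \<Rightarrow> 'a set \<Rightarrow> nat" where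
  "quot_card S T = card ((\<lambda>x. x +o T) ` S)"

definition d'_m :: "nat \<Rightarrow> nat \<Rightarrow> nat set set \<Rightarrow> nat set set \<Rightarrow> real" where
  "d'_m n m Q1 Q2 =
     (let P1 = pi_map n m ` edge_ideal n Q1; P2 = pi_map n m ` edge_ideal n Q2
      in log 2 (real (quot_card (P1 + P2) (P1 \<inter> P2))))"

definition d_m :: "nat \<Rightarrow> nat \<Rightarrow> nat set set \<Rightarrow> nat set set \<Rightarrow> real" where
  "d_m n m Q1 Q2 = d'_m n m Q1 Q2 / real ((n + m - 3) choose n)"

end

theory Submission
  imports Defs
begin

text \<open>Modulo the monomials of degree 4, a polynomial over F_2 is determined by its monomials of
  degree at most 3. So R_{n,4} is the F_2-space with these monomials as a basis, \<pi>_4(I_\<Gamma>) is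
  spanned by those of degree 2 and 3 divisible by a contact of \<Gamma>, and for two such coordinate
  spaces V_A, V_B the quotient (V_A + V_B)/(V_A \<inter> V_B) has 2^|A \<Delta> B| elements. For a
  secondary structure every contact i\<cdot>j yields x_i x_j and n distinct monomials x_i x_j x_k. A
  cubic monomial is divisible by contacts of both structures iff it comes from a common contact or
  it is x_i x_j x_k with i\<cdot>j in Q1 and j\<cdot>k in Q2, one for each of the A(\<Gamma>1 \<union> \<Gamma>2) pairs of
  adjacent contacts. This gives d'_4 = (n+1)|Q1 \<Delta> Q2| - 2A.

  For the second formula, count incidences between nodes and contacts of Q1 \<Delta> Q2: a node on two
  distinct contacts (these nodes correspond to the adjacent pairs) is counted twice, a node of
  degree 1 in Q1 \<union> Q2 once, and no other node is counted. The union of two matchings has maximum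
  degree 2, so every linear orbit with at least two nodes is a path with exactly two nodes of
  degree 1, while cyclic orbits have none. Hence 2|Q1 \<Delta> Q2| = 2\<Lambda>_{\<ge>2} + 2A.\<close>

section \<open>Polynomials over F_2 as finite sets of monomials\<close>

lemma bit_add_self [simp]: "(a::bit) + a = 0"
  by (cases a) simp_all

lemma f2poly_add_self [simp]: "(p::f2poly) + p = 0"
  by (rule poly_mapping_eqI) (simp only: lookup_add bit_add_self lookup_zero)

lemma f2poly_add_cancel_left [simp]: "(p::f2poly) + (p + q) = q"
  by (simp flip: add.assoc)

lemma f2poly_add_eq_0_iff: "(p::f2poly) + q = 0 \<longleftrightarrow> p = q"
  by (metis f2poly_add_cancel_left f2poly_add_self add_0_right)

definition poly_of_monoms :: "(nat \<Rightarrow>\<^sub>0 nat) set \<Rightarrow> f2poly" where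
  "poly_of_monoms X = (\<Sum>m\<in>X. Poly_Mapping.single m 1)"

lemma lookup_poly_of_monoms:
  "finite X \<Longrightarrow> Poly_Mapping.lookup (poly_of_monoms X) m = (if m \<in> X then 1 else 0)"
  unfolding poly_of_monoms_def by (simp add: lookup_sum lookup_single when_def)

lemma keys_poly_of_monoms [simp]: "finite X \<Longrightarrow> Poly_Mapping.keys (poly_of_monoms X) = X"
  by (auto simp: in_keys_iff lookup_poly_of_monoms split: if_splits)

lemma poly_of_monoms_keys [simp]: "poly_of_monoms (Poly_Mapping.keys p) = p"
  by (rule poly_mapping_eqI) (auto simp: lookup_poly_of_monoms in_keys_iff)

lemma poly_of_monoms_add:
  "finite X \<Longrightarrow> finite Y \<Longrightarrow> poly_of_monoms X + poly_of_monoms Y = poly_of_monoms (symdiff X Y)"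
  by (rule poly_mapping_eqI) (auto simp: lookup_poly_of_monoms lookup_add symdiff_def)

lemma keys_add_f2poly:
  "Poly_Mapping.keys ((p::f2poly) + q) = symdiff (Poly_Mapping.keys p) (Poly_Mapping.keys q)"
  by (metis finite_keys keys_poly_of_monoms poly_of_monoms_add poly_of_monoms_keys
      finite_Diff finite_Un symdiff_def)

lemma poly_of_monoms_split:
  "p = poly_of_monoms (Poly_Mapping.keys p \<inter> A) + poly_of_monoms (Poly_Mapping.keys p - A)"
proof -
  have "symdiff (Poly_Mapping.keys p \<inter> A) (Poly_Mapping.keys p - A) = Poly_Mapping.keys p"
    unfolding symdiff_def by blast
  then show ?thesis by (simp add: poly_of_monoms_add)
qed

lemma keys_add_monom:
  "Poly_Mapping.keys ((a::nat \<Rightarrow>\<^sub>0 nat) + b) = Poly_Mapping.keys a \<union> Poly_Mapping.keys b"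
  by (auto simp: in_keys_iff lookup_add)

lemma total_degree_eq_sum:
  "finite S \<Longrightarrow> Poly_Mapping.keys m \<subseteq> S \<Longrightarrow> total_degree m = sum (Poly_Mapping.lookup m) S"
  unfolding total_degree_def by (rule sum.mono_neutral_left) (auto simp: in_keys_iff)

lemma total_degree_add: "total_degree (a + b) = total_degree a + total_degree b"
proof -
  let ?S = "Poly_Mapping.keys a \<union> Poly_Mapping.keys b"
  have "total_degree (a + b) = sum (Poly_Mapping.lookup (a + b)) ?S"
    by (rule total_degree_eq_sum) (auto simp: keys_add_monom)
  also have "\<dots> = sum (Poly_Mapping.lookup a) ?S + sum (Poly_Mapping.lookup b) ?S"
    by (simp add: lookup_add sum.distrib)
  also have "\<dots> = total_degree a + total_degree b"
    using total_degree_eq_sum[of ?S a] total_degree_eq_sum[of ?S b] by auto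
  finally show ?thesis .
qed

lemma total_degree_single [simp]: "total_degree (Poly_Mapping.single k c) = c"
  unfolding total_degree_def by simp

lemma total_degree_zero [simp]: "total_degree 0 = 0"
  unfolding total_degree_def by simp

lemma total_degree_eq_0D: "total_degree m = 0 \<Longrightarrow> m = 0"
  unfolding total_degree_def by (rule poly_mapping_eqI) (auto simp: in_keys_iff)

lemma lookup_le_total_degree: "Poly_Mapping.lookup m i \<le> total_degree m"
proof (cases "i \<in> Poly_Mapping.keys m")
  case True
  then show ?thesis unfolding total_degree_def by (simp add: member_le_sum)
qed (simp add: in_keys_iff)

lemma total_degree_eq_1D:
  assumes "total_degree m = 1" shows "\<exists>k. m = Poly_Mapping.single k 1"
proof -
  obtain k where k: "k \<in> Poly_Mapping.keys m"
    using assms by (metis keys_eq_empty ex_in_conv total_degree_zero zero_neq_one)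
  have "Poly_Mapping.lookup m k + sum (Poly_Mapping.lookup m) (Poly_Mapping.keys m - {k}) = 1"
    using assms k unfolding total_degree_def by (simp add: sum.remove)
  moreover have "Poly_Mapping.lookup m k > 0" using k by (simp add: in_keys_iff)
  ultimately have mk: "Poly_Mapping.lookup m k = 1"
    and rest: "sum (Poly_Mapping.lookup m) (Poly_Mapping.keys m - {k}) = 0"
    by linarith+
  have "\<forall>i\<in>Poly_Mapping.keys m - {k}. Poly_Mapping.lookup m i = 0" using rest by simp
  then have "Poly_Mapping.lookup m i = 0" if "i \<noteq> k" for i
    using that by (auto simp: in_keys_iff)
  then have "m = Poly_Mapping.single k 1"
    by (intro poly_mapping_eqI) (auto simp: lookup_single mk when_def)
  then show ?thesis ..
qed

lemma exists_divisor_of_total_degree: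
  "k \<le> total_degree m \<Longrightarrow>
     \<exists>d. (\<forall>i. Poly_Mapping.lookup d i \<le> Poly_Mapping.lookup m i) \<and> total_degree d = k"
proof (induction k)
  case 0
  show ?case by (intro exI[of _ 0]) simp
next
  case (Suc k)
  then obtain d where d: "\<forall>i. Poly_Mapping.lookup d i \<le> Poly_Mapping.lookup m i" "total_degree d = k"
    by auto
  with Suc.prems obtain i where "Poly_Mapping.lookup d i \<noteq> Poly_Mapping.lookup m i"
    by (metis poly_mapping_eqI Suc_n_not_le_n)
  with d have lt: "Poly_Mapping.lookup d i < Poly_Mapping.lookup m i"
    using le_neq_implies_less by blast
  show ?case
  proof (intro exI[of _ "d + Poly_Mapping.single i 1"] conjI allI)
    show "Poly_Mapping.lookup (d + Poly_Mapping.single i 1) j \<le> Poly_Mapping.lookup m j" for j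
      using d(1) lt by (auto simp: lookup_add lookup_single when_def)
    show "total_degree (d + Poly_Mapping.single i 1) = Suc k"
      by (simp add: total_degree_add d(2))
  qed
qed

lemma finite_bounded_degree_monoms:
  "finite {m. Poly_Mapping.keys m \<subseteq> {1..n} \<and> total_degree m < d}"
proof (rule finite_imageD)
  let ?M = "{m. Poly_Mapping.keys m \<subseteq> {1..n} \<and> total_degree m < d}"
  let ?f = "\<lambda>m::nat \<Rightarrow>\<^sub>0 nat. map (Poly_Mapping.lookup m) [1..<Suc n]"
  show "inj_on ?f ?M"
  proof (rule inj_onI)
    fix a b assume a: "a \<in> ?M" and b: "b \<in> ?M" and "?f a = ?f b"
    then have "\<forall>i\<in>{1..<Suc n}. Poly_Mapping.lookup a i = Poly_Mapping.lookup b i"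
      by (simp only: map_eq_conv set_upt)
    then have on_range: "Poly_Mapping.lookup a i = Poly_Mapping.lookup b i" if "i \<in> {1..n}" for i
      using that by auto
    show "a = b"
    proof (rule poly_mapping_eqI)
      fix i show "Poly_Mapping.lookup a i = Poly_Mapping.lookup b i"
      proof (cases "i \<in> {1..n}")
        case False
        then have "i \<notin> Poly_Mapping.keys a" "i \<notin> Poly_Mapping.keys b" using a b by auto
        then show ?thesis by (simp add: in_keys_iff)
      qed (rule on_range)
    qed
  qed
  have "?f ` ?M \<subseteq> {xs. set xs \<subseteq> {..<d} \<and> length xs = n}"
    using lookup_le_total_degree by (fastforce intro: le_less_trans)
  then show "finite (?f ` ?M)"
    by (rule finite_subset) (simp add: finite_lists_length_eq)
qed

section \<open>The quotient ring R_{n,d}\<close>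

lemma ideal_gen_sum:
  "finite S \<Longrightarrow> (\<And>x. x \<in> S \<Longrightarrow> f x \<in> ideal_gen n G) \<Longrightarrow> sum f S \<in> ideal_gen n G"
  by (induction S rule: finite_induct) (auto intro: ideal_gen.intros)

lemma ideal_gen_if_monoms:
  assumes "\<And>m. m \<in> Poly_Mapping.keys p \<Longrightarrow> Poly_Mapping.single m 1 \<in> ideal_gen n G"
  shows "p \<in> ideal_gen n G"
proof -
  have "poly_of_monoms (Poly_Mapping.keys p) \<in> ideal_gen n G"
    unfolding poly_of_monoms_def using assms by (intro ideal_gen_sum) auto
  then show ?thesis by simp
qed

lemma ideal_gen_keys_closed:
  assumes "\<And>g m. g \<in> G \<Longrightarrow> m \<in> Poly_Mapping.keys g \<Longrightarrow> P m"
    and "\<And>a m. Poly_Mapping.keys a \<subseteq> {1..n} \<Longrightarrow> P m \<Longrightarrow> P (a + m)"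
    and "x \<in> ideal_gen n G" and "m \<in> Poly_Mapping.keys x"
  shows "P m"
  using assms(3,4)
proof (induction arbitrary: m rule: ideal_gen.induct)
  case (add a b)
  then show ?case using keys_add[of a b] by blast
next
  case (mult r g)
  then obtain a b where ab: "m = a + b" "a \<in> Poly_Mapping.keys r" "b \<in> Poly_Mapping.keys g"
    using keys_mult[of r g] by blast
  have "Poly_Mapping.keys a \<subseteq> {1..n}" using mult.hyps(1) ab(2) unfolding polys_def by blast
  then show ?case using assms(1,2) mult.hyps(2) ab by blast
qed simp

lemma polys_add: "p \<in> polys n \<Longrightarrow> q \<in> polys n \<Longrightarrow> p + q \<in> polys n"
  unfolding polys_def by (auto simp: keys_add_f2poly symdiff_def)

lemma deg_ideal_keys:
  "p \<in> deg_ideal n d \<Longrightarrow> m \<in> Poly_Mapping.keys p \<Longrightarrow> d \<le> total_degree m"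
  unfolding deg_ideal_def
  by (rule ideal_gen_keys_closed[where P = "\<lambda>m. d \<le> total_degree m"]) (auto simp: total_degree_add)

lemma monom_in_deg_ideal:
  assumes "Poly_Mapping.keys m \<subseteq> {1..n}" "d \<le> total_degree m"
  shows "Poly_Mapping.single m 1 \<in> deg_ideal n d"
proof -
  obtain c where c: "\<forall>i. Poly_Mapping.lookup c i \<le> Poly_Mapping.lookup m i" "total_degree c = d"
    using exists_divisor_of_total_degree[OF assms(2)] by blast
  have "(m - c) + c = m"
    by (rule poly_mapping_eqI) (simp add: lookup_add lookup_minus c(1))
  then have prod: "Poly_Mapping.single (m - c) (1::bit) * Poly_Mapping.single c 1 = Poly_Mapping.single m 1"
    by (simp only: mult_single mult_1)
  have "Poly_Mapping.keys c \<subseteq> Poly_Mapping.keys m"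
    using c(1) by (metis in_keys_iff le_zero_eq subsetI)
  then have "Poly_Mapping.single c (1::bit) \<in>
      {Poly_Mapping.single mon 1 | mon. Poly_Mapping.keys mon \<subseteq> {1..n} \<and> total_degree mon = d}"
    using assms(1) c(2) by blast
  moreover have "Poly_Mapping.single (m - c) (1::bit) \<in> polys n"
    using assms(1) by (auto simp: polys_def in_keys_iff lookup_minus)
  ultimately show ?thesis
    unfolding deg_ideal_def prod[symmetric] by (rule ideal_gen.mult[rotated])
qed

definition truncate :: "nat \<Rightarrow> f2poly \<Rightarrow> f2poly" where
  "truncate d p = poly_of_monoms {m \<in> Poly_Mapping.keys p. total_degree m < d}"

lemma keys_truncate [simp]:
  "Poly_Mapping.keys (truncate d p) = {m \<in> Poly_Mapping.keys p. total_degree m < d}"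
  unfolding truncate_def by simp

lemma truncate_add: "truncate d (p + q) = truncate d p + truncate d q"
  unfolding truncate_def
  by (simp add: poly_of_monoms_add keys_add_f2poly, rule arg_cong[where f = poly_of_monoms])
    (auto simp: symdiff_def)

lemma truncate_deg_ideal:
  assumes "p \<in> deg_ideal n d" shows "truncate d p = 0"
proof -
  have "{m \<in> Poly_Mapping.keys p. total_degree m < d} = {}"
    using deg_ideal_keys[OF assms] by fastforce
  then show ?thesis unfolding truncate_def poly_of_monoms_def by (simp only: sum.empty)
qed

lemma truncate_eq_0_iff:
  assumes "p \<in> polys n" shows "truncate d p = 0 \<longleftrightarrow> p \<in> deg_ideal n d"
proof
  assume "truncate d p = 0"
  then have "{m \<in> Poly_Mapping.keys p. total_degree m < d} = {}"
    using keys_truncate[of d p] by simp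
  then have "d \<le> total_degree m" if "m \<in> Poly_Mapping.keys p" for m
    using that by (metis (mono_tags, lifting) empty_iff leI mem_Collect_eq)
  moreover have "Poly_Mapping.keys m \<subseteq> {1..n}" if "m \<in> Poly_Mapping.keys p" for m
    using assms that unfolding polys_def by blast
  ultimately have "Poly_Mapping.single m 1 \<in> deg_ideal n d" if "m \<in> Poly_Mapping.keys p" for m
    using monom_in_deg_ideal that by blast
  then show "p \<in> deg_ideal n d" unfolding deg_ideal_def by (rule ideal_gen_if_monoms)
qed (rule truncate_deg_ideal)

lemma coset_absorb:
  fixes W :: "f2poly set"
  assumes "y \<in> W" and closed: "\<And>a b. a \<in> W \<Longrightarrow> b \<in> W \<Longrightarrow> a + b \<in> W"
  shows "(x + y) +o W = x +o W"
proof
  show "(x + y) +o W \<subseteq> x +o W"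
  proof
    fix z assume "z \<in> (x + y) +o W"
    then obtain w where "w \<in> W" "z = x + (y + w)" unfolding elt_set_plus_def by (auto simp: add.assoc)
    then show "z \<in> x +o W" using assms unfolding elt_set_plus_def by blast
  qed
  show "x +o W \<subseteq> (x + y) +o W"
  proof
    fix z assume "z \<in> x +o W"
    then obtain w where w: "w \<in> W" "z = x + w" unfolding elt_set_plus_def by auto
    then have "z = (x + y) + (y + w)" by (simp add: add.assoc)
    then show "z \<in> (x + y) +o W" using assms w(1) unfolding elt_set_plus_def by auto
  qed
qed

lemma in_pi_map: "p \<in> pi_map n d p"
  unfolding pi_map_def deg_ideal_def using set_plus_intro2[OF ideal_gen.zero, of p] by simp

lemma pi_map_add: "pi_map n d p + pi_map n d q = pi_map n d (p + q)"
proof -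
  have "deg_ideal n d + deg_ideal n d = deg_ideal n d"
  proof
    show "deg_ideal n d + deg_ideal n d \<subseteq> deg_ideal n d"
      unfolding deg_ideal_def by (auto elim!: set_plus_elim intro: ideal_gen.add)
    show "deg_ideal n d \<subseteq> deg_ideal n d + deg_ideal n d"
      unfolding deg_ideal_def using set_plus_intro[OF ideal_gen.zero] by fastforce
  qed
  then show ?thesis unfolding pi_map_def by (simp add: set_plus_rearrange)
qed

lemma pi_map_eq_iff:
  assumes "p \<in> polys n" "q \<in> polys n"
  shows "pi_map n d p = pi_map n d q \<longleftrightarrow> truncate d p = truncate d q"
proof -
  have "pi_map n d p = pi_map n d q \<longleftrightarrow> p + q \<in> deg_ideal n d"
  proof
    assume "pi_map n d p = pi_map n d q"
    then obtain j where "j \<in> deg_ideal n d" "p = q + j"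
      using in_pi_map[of p n d] unfolding pi_map_def elt_set_plus_def by auto
    then show "p + q \<in> deg_ideal n d" by (simp add: add.commute[of q j] add.assoc)
  next
    assume "p + q \<in> deg_ideal n d"
    then have "pi_map n d (q + (p + q)) = pi_map n d q"
      unfolding pi_map_def deg_ideal_def by (intro coset_absorb) (auto intro: ideal_gen.add)
    then show "pi_map n d p = pi_map n d q" by (simp add: add.left_commute[of q p q])
  qed
  also have "\<dots> \<longleftrightarrow> truncate d (p + q) = 0"
    using truncate_eq_0_iff polys_add assms by blast
  also have "\<dots> \<longleftrightarrow> truncate d p = truncate d q"
    unfolding truncate_add by (rule f2poly_add_eq_0_iff)
  finally show ?thesis .
qed

definition truncate_coset :: "nat \<Rightarrow> nat \<Rightarrow> f2poly set \<Rightarrow> f2poly" where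
  "truncate_coset n d X = truncate d (SOME p. p \<in> X \<and> p \<in> polys n)"

lemma truncate_coset_pi_map:
  assumes "p \<in> polys n" shows "truncate_coset n d (pi_map n d p) = truncate d p"
proof -
  define q where "q = (SOME q. q \<in> pi_map n d p \<and> q \<in> polys n)"
  have "q \<in> pi_map n d p"
    unfolding q_def using in_pi_map assms by (rule someI[where x = p, OF conjI, THEN conjunct1])
  then obtain j where "j \<in> deg_ideal n d" "q = p + j"
    unfolding pi_map_def elt_set_plus_def by auto
  then have "truncate d q = truncate d p" by (simp add: truncate_add truncate_deg_ideal)
  then show ?thesis unfolding truncate_coset_def q_def .
qed

lemma quot_card_image:
  fixes \<phi> :: "'a::plus \<Rightarrow> 'b::plus"
  assumes inj: "inj_on \<phi> U" and hom: "\<And>x y. x \<in> U \<Longrightarrow> y \<in> U \<Longrightarrow> \<phi> (x + y) = \<phi> x + \<phi> y"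
    and closed: "\<And>x y. x \<in> U \<Longrightarrow> y \<in> U \<Longrightarrow> x + y \<in> U" and "S \<subseteq> U" "T \<subseteq> U"
  shows "quot_card S T = quot_card (\<phi> ` S) (\<phi> ` T)"
proof -
  have coset_image: "\<phi> ` (x +o T) = \<phi> x +o \<phi> ` T" if "x \<in> S" for x
  proof -
    have "\<phi> ` (x +o T) = (\<lambda>t. \<phi> (x + t)) ` T" unfolding elt_set_plus_def by auto
    also have "\<dots> = (\<lambda>t. \<phi> x + \<phi> t) ` T" using hom assms(4,5) that by (intro image_cong) auto
    finally show ?thesis unfolding elt_set_plus_def by auto
  qed
  have "(\<lambda>x. x +o T) ` S \<subseteq> Pow U"
    using closed assms(4,5) unfolding elt_set_plus_def by auto
  then have "inj_on (image \<phi>) ((\<lambda>x. x +o T) ` S)"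
    using inj_on_image_Pow[OF inj] by (rule inj_on_subset[rotated])
  then have "quot_card S T = card (image \<phi> ` (\<lambda>x. x +o T) ` S)"
    unfolding quot_card_def by (simp add: card_image)
  also have "image \<phi> ` (\<lambda>x. x +o T) ` S = (\<lambda>y. y +o \<phi> ` T) ` \<phi> ` S"
    unfolding image_image using coset_image by (intro image_cong) auto
  finally show ?thesis unfolding quot_card_def .
qed

lemma image_set_plus:
  assumes hom: "\<And>x y. x \<in> U \<Longrightarrow> y \<in> U \<Longrightarrow> \<phi> (x + y) = \<phi> x + \<phi> y" and "A \<subseteq> U" "B \<subseteq> U"
  shows "\<phi> ` (A + B) = \<phi> ` A + \<phi> ` B"
proof
  show "\<phi> ` (A + B) \<subseteq> \<phi> ` A + \<phi> ` B"
    using assms by (auto elim!: set_plus_elim) (metis set_plus_intro imageI subsetD)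
  show "\<phi> ` A + \<phi> ` B \<subseteq> \<phi> ` (A + B)"
    using assms by (auto elim!: set_plus_elim) (metis set_plus_intro imageI subsetD)
qed

definition span_monoms :: "(nat \<Rightarrow>\<^sub>0 nat) set \<Rightarrow> f2poly set" where
  "span_monoms A = {p. Poly_Mapping.keys p \<subseteq> A}"

lemma span_monoms_plus: "span_monoms A + span_monoms B = span_monoms (A \<union> B)"
proof
  show "span_monoms A + span_monoms B \<subseteq> span_monoms (A \<union> B)"
    by (auto elim!: set_plus_elim simp: span_monoms_def keys_add_f2poly symdiff_def)
  show "span_monoms (A \<union> B) \<subseteq> span_monoms A + span_monoms B"
  proof
    fix p assume "p \<in> span_monoms (A \<union> B)"
    then have "poly_of_monoms (Poly_Mapping.keys p \<inter> A) \<in> span_monoms A"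
      "poly_of_monoms (Poly_Mapping.keys p - A) \<in> span_monoms B"
      unfolding span_monoms_def by auto
    then show "p \<in> span_monoms A + span_monoms B"
      by (subst poly_of_monoms_split[of p A]) (rule set_plus_intro)
  qed
qed

lemma span_monoms_Int: "span_monoms A \<inter> span_monoms B = span_monoms (A \<inter> B)"
  unfolding span_monoms_def by auto

lemma inj_on_coset_poly_of_monoms:
  assumes "finite A"
  shows "inj_on (\<lambda>X. poly_of_monoms X +o span_monoms B) (Pow (A - B))"
proof (rule inj_onI)
  fix X Y assume X: "X \<in> Pow (A - B)" and Y: "Y \<in> Pow (A - B)"
    and eq: "poly_of_monoms X +o span_monoms B = poly_of_monoms Y +o span_monoms B"
  have fin: "finite X" "finite Y" using X Y assms by (auto intro: finite_subset)
  have "poly_of_monoms X \<in> poly_of_monoms Y +o span_monoms B"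
    using eq set_plus_intro2[of 0 "span_monoms B" "poly_of_monoms X"] unfolding span_monoms_def by auto
  then obtain w where w: "Poly_Mapping.keys w \<subseteq> B" "poly_of_monoms X = poly_of_monoms Y + w"
    unfolding elt_set_plus_def span_monoms_def by auto
  have "X = Poly_Mapping.keys (poly_of_monoms Y + w)"
    using w(2) fin by (metis keys_poly_of_monoms)
  then have "X = symdiff Y (Poly_Mapping.keys w)"
    using fin by (simp add: keys_add_f2poly)
  then show "X = Y" using X Y w(1) unfolding symdiff_def by blast
qed

lemma quot_card_span_monoms:
  assumes "finite A" "B \<subseteq> A"
  shows "quot_card (span_monoms A) (span_monoms B) = 2 ^ card (A - B)"
proof -
  let ?W = "span_monoms B" and ?coset = "\<lambda>X. poly_of_monoms X +o span_monoms B"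
  have closed: "a + b \<in> ?W" if "a \<in> ?W" "b \<in> ?W" for a b
    using that unfolding span_monoms_def by (auto simp: keys_add_f2poly symdiff_def)
  have "(\<lambda>p. p +o ?W) ` span_monoms A = ?coset ` Pow (A - B)"
  proof (intro equalityI subsetI)
    fix z assume "z \<in> (\<lambda>p. p +o ?W) ` span_monoms A"
    then obtain p where p: "p \<in> span_monoms A" "z = p +o ?W" by blast
    have "poly_of_monoms (Poly_Mapping.keys p \<inter> B) \<in> ?W" unfolding span_monoms_def by simp
    then have "z = ?coset (Poly_Mapping.keys p - B)"
      using p(2) poly_of_monoms_split[of p B] coset_absorb[OF _ closed]
      by (metis add.commute)
    moreover have "Poly_Mapping.keys p - B \<in> Pow (A - B)" using p(1) unfolding span_monoms_def by auto
    ultimately show "z \<in> ?coset ` Pow (A - B)" by blast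
  next
    fix z assume "z \<in> ?coset ` Pow (A - B)"
    then obtain X where X: "X \<subseteq> A - B" "z = ?coset X" by blast
    moreover have "finite X" using X(1) assms(1) by (meson Diff_subset finite_subset)
    ultimately have "poly_of_monoms X \<in> span_monoms A" unfolding span_monoms_def by auto
    then show "z \<in> (\<lambda>p. p +o ?W) ` span_monoms A" using X(2) by blast
  qed
  moreover have "inj_on ?coset (Pow (A - B))" using assms(1) by (rule inj_on_coset_poly_of_monoms)
  ultimately have "quot_card (span_monoms A) ?W = card (Pow (A - B))"
    unfolding quot_card_def by (simp add: card_image)
  then show ?thesis using assms(1) by (simp add: card_Pow)
qed

lemma quot_card_pi_map_images:
  assumes "S1 \<subseteq> polys n" "S2 \<subseteq> polys n" "finite A1" "finite A2"
    and "truncate d ` S1 = span_monoms A1" "truncate d ` S2 = span_monoms A2"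
  shows "quot_card (pi_map n d ` S1 + pi_map n d ` S2) (pi_map n d ` S1 \<inter> pi_map n d ` S2)
           = 2 ^ card (symdiff A1 A2)"
proof -
  let ?U = "pi_map n d ` polys n" and ?\<phi> = "truncate_coset n d"
  have inj: "inj_on ?\<phi> ?U"
  proof (rule inj_onI)
    fix x y assume "x \<in> ?U" "y \<in> ?U" and eq: "?\<phi> x = ?\<phi> y"
    then obtain p q where "p \<in> polys n" "q \<in> polys n" "x = pi_map n d p" "y = pi_map n d q"
      by blast
    with eq show "x = y" by (simp add: truncate_coset_pi_map pi_map_eq_iff)
  qed
  have hom: "?\<phi> (x + y) = ?\<phi> x + ?\<phi> y" if "x \<in> ?U" "y \<in> ?U" for x y
    using that by (auto simp: pi_map_add truncate_coset_pi_map polys_add truncate_add)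
  have closed: "x + y \<in> ?U" if "x \<in> ?U" "y \<in> ?U" for x y
    using that by (auto simp: pi_map_add intro: polys_add)
  have sub: "pi_map n d ` S1 \<subseteq> ?U" "pi_map n d ` S2 \<subseteq> ?U" using assms(1,2) by auto
  have "?\<phi> ` pi_map n d ` S = truncate d ` S" if "S \<subseteq> polys n" for S
    using that truncate_coset_pi_map unfolding image_image by (intro image_cong) auto
  then have img: "?\<phi> ` pi_map n d ` S1 = span_monoms A1" "?\<phi> ` pi_map n d ` S2 = span_monoms A2"
    using assms(1,2,5,6) by simp_all
  have "quot_card (pi_map n d ` S1 + pi_map n d ` S2) (pi_map n d ` S1 \<inter> pi_map n d ` S2)
      = quot_card (?\<phi> ` (pi_map n d ` S1 + pi_map n d ` S2)) (?\<phi> ` (pi_map n d ` S1 \<inter> pi_map n d ` S2))"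
    using sub assms(1,2)
    by (intro quot_card_image[OF inj hom closed])
      (auto elim!: set_plus_elim simp: pi_map_add intro!: imageI polys_add)
  also have "\<dots> = quot_card (span_monoms (A1 \<union> A2)) (span_monoms (A1 \<inter> A2))"
    using image_set_plus[OF hom sub] inj_on_image_Int[OF inj sub] img
    by (simp add: span_monoms_plus span_monoms_Int)
  also have "\<dots> = 2 ^ card ((A1 \<union> A2) - (A1 \<inter> A2))"
    using assms(3,4) by (intro quot_card_span_monoms) auto
  also have "(A1 \<union> A2) - (A1 \<inter> A2) = symdiff A1 A2"
    unfolding symdiff_def by blast
  finally show ?thesis .
qed

section \<open>Truncated edge ideals\<close>

definition monom_of_set :: "nat set \<Rightarrow> (nat \<Rightarrow>\<^sub>0 nat)" where
  "monom_of_set e = (\<Sum>v\<in>e. Poly_Mapping.single v 1)"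

lemma lookup_monom_of_set:
  "finite e \<Longrightarrow> Poly_Mapping.lookup (monom_of_set e) v = (if v \<in> e then 1 else 0)"
  unfolding monom_of_set_def by (simp add: lookup_sum lookup_single when_def)

lemma keys_monom_of_set [simp]: "finite e \<Longrightarrow> Poly_Mapping.keys (monom_of_set e) = e"
  by (auto simp: in_keys_iff lookup_monom_of_set split: if_splits)

lemma total_degree_monom_of_set [simp]: "finite e \<Longrightarrow> total_degree (monom_of_set e) = card e"
  unfolding total_degree_def by (simp add: lookup_monom_of_set)

lemma monom_of_set_insert:
  "finite e \<Longrightarrow> k \<notin> e \<Longrightarrow> monom_of_set (insert k e) = monom_of_set e + Poly_Mapping.single k 1"
  unfolding monom_of_set_def by (simp add: add.commute)

lemma var_mon_mult:
  "i \<noteq> j \<Longrightarrow> var_mon i * var_mon j = Poly_Mapping.single (monom_of_set {i, j}) 1"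
  unfolding var_mon_def monom_of_set_def by (simp add: mult_single)

definition edges_on :: "nat \<Rightarrow> nat set set \<Rightarrow> bool" where
  "edges_on n Q \<longleftrightarrow> (\<forall>e\<in>Q. e \<subseteq> {1..n} \<and> card e = 2)"

lemma edges_onD:
  "edges_on n Q \<Longrightarrow> e \<in> Q \<Longrightarrow> e \<subseteq> {1..n} \<and> card e = 2 \<and> finite e"
  unfolding edges_on_def using card.infinite by fastforce

lemma finite_edges_on: "edges_on n Q \<Longrightarrow> finite Q"
  unfolding edges_on_def by (rule finite_subset[of Q "Pow {1..n}"]) auto

definition edge_monoms :: "nat \<Rightarrow> nat \<Rightarrow> nat set set \<Rightarrow> (nat \<Rightarrow>\<^sub>0 nat) set" where
  "edge_monoms n d Q = {m. Poly_Mapping.keys m \<subseteq> {1..n} \<and> total_degree m < d \<and>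
     (\<exists>e\<in>Q. \<exists>c. m = c + monom_of_set e)}"

lemma finite_edge_monoms: "finite (edge_monoms n d Q)"
  by (rule finite_subset[OF _ finite_bounded_degree_monoms]) (auto simp: edge_monoms_def)

lemma edge_ideal_keys:
  assumes "edges_on n Q" "p \<in> edge_ideal n Q" "m \<in> Poly_Mapping.keys p"
  shows "Poly_Mapping.keys m \<subseteq> {1..n} \<and> (\<exists>e\<in>Q. \<exists>c. m = c + monom_of_set e)"
  using assms(2,3) unfolding edge_ideal_def
proof (rule ideal_gen_keys_closed[rotated 2])
  fix g m assume "g \<in> {var_mon i * var_mon j | i j. {i, j} \<in> Q}" "m \<in> Poly_Mapping.keys g"
  then obtain i j where ij: "{i, j} \<in> Q" "m \<in> Poly_Mapping.keys (var_mon i * var_mon j)" by blast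
  then have "i \<noteq> j" using edges_onD[OF assms(1)] by fastforce
  then have "m = 0 + monom_of_set {i, j}" using ij(2) by (simp add: var_mon_mult)
  then show "Poly_Mapping.keys m \<subseteq> {1..n} \<and> (\<exists>e\<in>Q. \<exists>c. m = c + monom_of_set e)"
    using ij(1) edges_onD[OF assms(1) ij(1)] by (auto intro!: bexI[of _ "{i, j}"])
next
  fix a m :: "nat \<Rightarrow>\<^sub>0 nat"
  assume a: "Poly_Mapping.keys a \<subseteq> {1..n}"
    and m: "Poly_Mapping.keys m \<subseteq> {1..n} \<and> (\<exists>e\<in>Q. \<exists>c. m = c + monom_of_set e)"
  from m obtain e c where e: "e \<in> Q" "m = c + monom_of_set e" by blast
  have "Poly_Mapping.keys (a + m) \<subseteq> {1..n}" using a m by (simp add: keys_add_monom)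
  moreover have "a + m = (a + c) + monom_of_set e" using e(2) by (simp add: add.assoc)
  ultimately show "Poly_Mapping.keys (a + m) \<subseteq> {1..n} \<and> (\<exists>e\<in>Q. \<exists>c. a + m = c + monom_of_set e)"
    using e(1) by blast
qed

lemma edge_ideal_subset_polys: "edges_on n Q \<Longrightarrow> edge_ideal n Q \<subseteq> polys n"
  using edge_ideal_keys unfolding polys_def by blast

lemma monom_in_edge_ideal:
  assumes "edges_on n Q" "e \<in> Q" "Poly_Mapping.keys (c + monom_of_set e) \<subseteq> {1..n}"
  shows "Poly_Mapping.single (c + monom_of_set e) 1 \<in> edge_ideal n Q"
proof -
  obtain i j where ij: "e = {i, j}" "i \<noteq> j"
    using edges_onD[OF assms(1,2)] by (meson card_2_iff)
  have "Poly_Mapping.single c (1::bit) \<in> polys n"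
    using assms(3) unfolding polys_def by (auto simp: keys_add_monom)
  moreover have "var_mon i * var_mon j \<in> {var_mon i * var_mon j | i j. {i, j} \<in> Q}"
    using assms(2) ij(1) by blast
  ultimately have "Poly_Mapping.single c 1 * (var_mon i * var_mon j) \<in> edge_ideal n Q"
    unfolding edge_ideal_def by (rule ideal_gen.mult)
  then show ?thesis by (simp add: var_mon_mult[OF ij(2)] mult_single ij(1))
qed

lemma truncate_edge_ideal:
  assumes "edges_on n Q"
  shows "truncate d ` edge_ideal n Q = span_monoms (edge_monoms n d Q)"
proof (intro equalityI subsetI)
  fix x assume "x \<in> truncate d ` edge_ideal n Q"
  then obtain p where "p \<in> edge_ideal n Q" "x = truncate d p" by blast
  then show "x \<in> span_monoms (edge_monoms n d Q)"
    using edge_ideal_keys[OF assms] unfolding span_monoms_def edge_monoms_def by auto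
next
  fix p assume p: "p \<in> span_monoms (edge_monoms n d Q)"
  then have "Poly_Mapping.single m 1 \<in> edge_ideal n Q" if "m \<in> Poly_Mapping.keys p" for m
    using that monom_in_edge_ideal[OF assms] unfolding span_monoms_def edge_monoms_def by blast
  then have "p \<in> edge_ideal n Q"
    unfolding edge_ideal_def by (rule ideal_gen_if_monoms)
  moreover have "{m \<in> Poly_Mapping.keys p. total_degree m < d} = Poly_Mapping.keys p"
    using p unfolding span_monoms_def edge_monoms_def by blast
  then have "truncate d p = p" unfolding truncate_def by simp
  ultimately show "p \<in> truncate d ` edge_ideal n Q" by (metis image_eqI)
qed

theorem d'_m_eq_card_symdiff_edge_monoms:
  assumes "edges_on n Q1" "edges_on n Q2"
  shows "d'_m n d Q1 Q2 = real (card (symdiff (edge_monoms n d Q1) (edge_monoms n d Q2)))"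
proof -
  have "quot_card (pi_map n d ` edge_ideal n Q1 + pi_map n d ` edge_ideal n Q2)
      (pi_map n d ` edge_ideal n Q1 \<inter> pi_map n d ` edge_ideal n Q2)
      = 2 ^ card (symdiff (edge_monoms n d Q1) (edge_monoms n d Q2))"
    using assms by (intro quot_card_pi_map_images edge_ideal_subset_polys truncate_edge_ideal
        finite_edge_monoms)
  then show ?thesis unfolding d'_m_def Let_def by simp
qed

section \<open>Counting monomials of degree 2 and 3\<close>

lemma card_symdiff_add_card_Int:
  assumes "finite A" "finite B"
  shows "card (symdiff A B) + 2 * card (A \<inter> B) = card A + card B"
proof -
  have "symdiff A B = (A \<union> B) - (A \<inter> B)" unfolding symdiff_def by blast
  moreover have "A \<inter> B \<subseteq> A \<union> B" by blast
  ultimately have "card (symdiff A B) = card (A \<union> B) - card (A \<inter> B)"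
    using assms by (metis card_Diff_subset finite_Int)
  moreover have "card (A \<inter> B) \<le> card (A \<union> B)" using assms by (intro card_mono) auto
  ultimately show ?thesis using card_Un_Int[OF assms] by linarith
qed

lemma Un_Int_Un_if_disjoint:
  "(A1 \<union> A2) \<inter> (B1 \<union> B2) = {} \<Longrightarrow> (A1 \<union> B1) \<inter> (A2 \<union> B2) = (A1 \<inter> A2) \<union> (B1 \<inter> B2)"
  by blast

lemma doubleton_share_node:
  assumes "card e = 2" "card f = 2" "e \<noteq> f" "v \<in> e" "v \<in> f"
  obtains k where "f = {v, k}" "k \<notin> e" "e \<union> f = insert k e"
proof -
  obtain k where k: "f = {v, k}" "k \<noteq> v"
    using assms(2,5) by (metis card_2_iff insert_commute insertE singletonD)
  have "k \<notin> e"
  proof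
    assume "k \<in> e"
    then have "f \<subseteq> e" using k assms(4) by blast
    then show False using assms(1-3) by (metis card_subset_eq card.infinite zero_neq_numeral)
  qed
  moreover have "e \<union> f = insert k e" using k assms(4) by blast
  ultimately show ?thesis using k that by blast
qed

lemma doubleton_insert_eq:
  assumes "card e = 2" "card f = 2" "e \<noteq> f" "insert k e = insert l f"
  shows "k \<notin> e" "e \<union> f = insert k e" "e \<inter> f \<noteq> {}"
proof -
  have fin: "finite e" "finite f" using assms(1,2) card.infinite by fastforce+
  have "f \<subseteq> insert k e" using assms(4) by blast
  moreover have "\<not> f \<subseteq> e" using assms(1-3) fin by (metis card_subset_eq)
  ultimately have "k \<in> f" "k \<notin> e" by blast+
  then show "k \<notin> e" "e \<union> f = insert k e" using \<open>f \<subseteq> insert k e\<close> by blast+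
  show "e \<inter> f \<noteq> {}"
  proof
    assume "e \<inter> f = {}"
    then have "card (e \<union> f) = 4" using assms(1,2) fin by (simp add: card_Un_disjoint)
    then show False using \<open>e \<union> f = insert k e\<close> \<open>k \<notin> e\<close> assms(1) fin by simp
  qed
qed

definition matching :: "nat set set \<Rightarrow> bool" where
  "matching Q \<longleftrightarrow> (\<forall>e\<in>Q. \<forall>f\<in>Q. e \<inter> f \<noteq> {} \<longrightarrow> e = f)"

lemma matching_eqI: "matching Q \<Longrightarrow> e \<in> Q \<Longrightarrow> f \<in> Q \<Longrightarrow> v \<in> e \<Longrightarrow> v \<in> f \<Longrightarrow> e = f"
  unfolding matching_def by blast

lemma secondary_structureD: "secondary_structure n Q \<Longrightarrow> edges_on n Q \<and> matching Q"
  unfolding secondary_structure_def contact_structure_def edges_on_def matching_def by blast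

lemma matching_eq_if_within_3:
  assumes "matching Q" "edges_on n Q" "e \<in> Q" "e' \<in> Q" "e \<union> e' \<subseteq> U" "finite U" "card U \<le> 3"
  shows "e = e'"
proof (rule ccontr)
  assume "e \<noteq> e'"
  then have "e \<inter> e' = {}" using assms(1,3,4) unfolding matching_def by blast
  then have "card (e \<union> e') = 4" using edges_onD[OF assms(2)] assms(3,4) by (simp add: card_Un_disjoint)
  moreover have "card (e \<union> e') \<le> card U" using assms(5,6) by (rule card_mono[rotated])
  ultimately show False using assms(7) by simp
qed

definition edge_var_monom :: "nat set \<Rightarrow> nat \<Rightarrow> (nat \<Rightarrow>\<^sub>0 nat)" where
  "edge_var_monom e k = monom_of_set e + Poly_Mapping.single k 1"

lemma keys_edge_var_monom [simp]:
  "finite e \<Longrightarrow> Poly_Mapping.keys (edge_var_monom e k) = insert k e"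
  unfolding edge_var_monom_def by (simp add: keys_add_monom)

lemma total_degree_edge_var_monom [simp]:
  "finite e \<Longrightarrow> total_degree (edge_var_monom e k) = card e + 1"
  unfolding edge_var_monom_def by (simp add: total_degree_add)

lemma edge_var_monom_insert:
  "finite e \<Longrightarrow> k \<notin> e \<Longrightarrow> edge_var_monom e k = monom_of_set (insert k e)"
  unfolding edge_var_monom_def by (simp add: monom_of_set_insert)

lemma edge_monoms_4:
  assumes "edges_on n Q"
  shows "edge_monoms n 4 Q = monom_of_set ` Q \<union> case_prod edge_var_monom ` (Q \<times> {1..n})"
proof (intro equalityI subsetI)
  fix m assume "m \<in> edge_monoms n 4 Q"
  then obtain e c where ec: "e \<in> Q" "m = c + monom_of_set e" "Poly_Mapping.keys m \<subseteq> {1..n}"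
      "total_degree m < 4"
    unfolding edge_monoms_def by blast
  have e: "card e = 2" "finite e" using edges_onD[OF assms ec(1)] by auto
  then have "total_degree c \<le> 1" using ec(2,4) by (simp add: total_degree_add)
  then consider "total_degree c = 0" | "total_degree c = 1" by linarith
  then show "m \<in> monom_of_set ` Q \<union> case_prod edge_var_monom ` (Q \<times> {1..n})"
  proof cases
    case 1
    then have "c = 0" by (rule total_degree_eq_0D)
    then show ?thesis using ec by simp
  next
    case 2
    then obtain k where k: "c = Poly_Mapping.single k 1" using total_degree_eq_1D by blast
    then have "m = edge_var_monom e k" using ec(2) by (simp add: edge_var_monom_def add.commute)
    moreover have "k \<in> {1..n}" using ec(3) e(2) \<open>m = edge_var_monom e k\<close> by simp
    ultimately show ?thesis using ec(1) by auto
  qed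
next
  fix m assume "m \<in> monom_of_set ` Q \<union> case_prod edge_var_monom ` (Q \<times> {1..n})"
  then consider e where "e \<in> Q" "m = 0 + monom_of_set e"
    | e k where "e \<in> Q" "k \<in> {1..n}" "m = Poly_Mapping.single k 1 + monom_of_set e"
    by (auto simp: edge_var_monom_def add.commute)
  then show "m \<in> edge_monoms n 4 Q"
  proof cases
    case 1
    then show ?thesis using edges_onD[OF assms 1(1)] unfolding edge_monoms_def by fastforce
  next
    case 2
    then show ?thesis using edges_onD[OF assms 2(1)] unfolding edge_monoms_def
      by (auto simp: keys_add_monom total_degree_add)
  qed
qed

lemma inj_on_monom_of_set: "inj_on monom_of_set {e. finite e}"
  by (rule inj_onI) (metis keys_monom_of_set mem_Collect_eq)

lemma inj_on_edge_var_monom: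
  assumes "matching Q" "edges_on n Q"
  shows "inj_on (case_prod edge_var_monom) (Q \<times> {1..n})"
proof (rule inj_onI, clarify)
  fix e k e' k' assume e: "e \<in> Q" "e' \<in> Q" and eq: "edge_var_monom e k = edge_var_monom e' k'"
  have fin: "finite e" "finite e'" using edges_onD[OF assms(2)] e by auto
  then have keys_eq: "insert k e = insert k' e'" using arg_cong[OF eq, of Poly_Mapping.keys] by simp
  have "e \<union> e' \<subseteq> insert k e" using keys_eq by blast
  moreover have "card (insert k e) \<le> 3"
    using fin edges_onD[OF assms(2) e(1)] by (simp add: card_insert_if)
  ultimately have "e = e'" using matching_eq_if_within_3[OF assms e] fin by blast
  then have "Poly_Mapping.single k (1::nat) = Poly_Mapping.single k' 1"
    using eq unfolding edge_var_monom_def by simp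
  then show "e = e' \<and> k = k'" using \<open>e = e'\<close> by (metis keys_single one_neq_zero singleton_inject)
qed

lemma monom_of_set_edge_var_monom_disjoint:
  assumes "edges_on n Q" "edges_on n Q'"
  shows "monom_of_set ` Q \<inter> case_prod edge_var_monom ` (Q' \<times> K) = {}"
proof (rule equals0I)
  fix m assume "m \<in> monom_of_set ` Q \<inter> case_prod edge_var_monom ` (Q' \<times> K)"
  then obtain e e' k where e: "e \<in> Q" "e' \<in> Q'" and m: "m = monom_of_set e" "m = edge_var_monom e' k"
    by auto
  have "total_degree (monom_of_set e) = 2" "total_degree (edge_var_monom e' k) = 3"
    using edges_onD[OF assms(1) e(1)] edges_onD[OF assms(2) e(2)] by simp_all
  then show False using m by simp
qed

lemma card_edge_monoms_4:
  assumes "matching Q" "edges_on n Q"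
  shows "card (edge_monoms n 4 Q) = (n + 1) * card Q"
proof -
  have fin: "finite Q" using finite_edges_on[OF assms(2)] .
  have "monom_of_set ` Q \<inter> case_prod edge_var_monom ` (Q \<times> {1..n}) = {}"
    using monom_of_set_edge_var_monom_disjoint[OF assms(2) assms(2)] .
  moreover have "card (monom_of_set ` Q) = card Q"
    using inj_on_subset[OF inj_on_monom_of_set] edges_onD[OF assms(2)] by (auto intro: card_image)
  moreover have "card (case_prod edge_var_monom ` (Q \<times> {1..n})) = card Q * n"
    using card_image[OF inj_on_edge_var_monom[OF assms]] by (simp add: card_cartesian_product)
  ultimately show ?thesis
    unfolding edge_monoms_4[OF assms(2)] using fin by (simp add: card_Un_disjoint)
qed

locale two_matchings =
  fixes n :: nat and Q1 Q2 :: "nat set set"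
  assumes edges1: "edges_on n Q1" and edges2: "edges_on n Q2"
    and matching1: "matching Q1" and matching2: "matching Q2"
begin

lemma finite1: "finite Q1" and finite2: "finite Q2"
  using finite_edges_on edges1 edges2 by auto

definition touching_pairs :: "(nat set \<times> nat set) set" where
  "touching_pairs = {(e, f). e \<in> Q1 \<and> f \<in> Q2 \<and> e \<noteq> f \<and> e \<inter> f \<noteq> {}}"

lemma finite_touching_pairs: "finite touching_pairs"
  by (rule finite_subset[of _ "Q1 \<times> Q2"]) (auto simp: touching_pairs_def finite1 finite2)

text \<open>Two distinct contacts sharing a node cannot belong to the same matching.\<close>
lemma A_count_eq_card_touching_pairs: "A_count (Q1 \<union> Q2) = card touching_pairs"
proof -
  let ?pair = "\<lambda>(e, f). {e, f}"
  have "{{e, f} | e f. e \<in> Q1 \<union> Q2 \<and> f \<in> Q1 \<union> Q2 \<and> e \<noteq> f \<and> e \<inter> f \<noteq> {}}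
      = ?pair ` touching_pairs"
  proof (intro equalityI subsetI)
    fix x assume "x \<in> {{e, f} | e f. e \<in> Q1 \<union> Q2 \<and> f \<in> Q1 \<union> Q2 \<and> e \<noteq> f \<and> e \<inter> f \<noteq> {}}"
    then obtain e f where ef: "x = {e, f}" "e \<in> Q1 \<union> Q2" "f \<in> Q1 \<union> Q2" "e \<noteq> f" "e \<inter> f \<noteq> {}"
      by blast
    then consider "(e, f) \<in> touching_pairs" | "(f, e) \<in> touching_pairs"
      using matching1 matching2 unfolding matching_def touching_pairs_def by blast
    then show "x \<in> ?pair ` touching_pairs"
    proof cases
      case 1
      then show ?thesis using ef(1) by force
    next
      case 2
      moreover have "x = {f, e}" using ef(1) by blast
      ultimately show ?thesis by force
    qed
  qed (auto simp: touching_pairs_def)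
  moreover have "inj_on ?pair touching_pairs"
  proof (rule inj_onI, clarify)
    fix e f e' f' assume "(e, f) \<in> touching_pairs" "(e', f') \<in> touching_pairs" "{e, f} = {e', f'}"
    then show "e = e' \<and> f = f'"
      using matching1 unfolding touching_pairs_def matching_def by (auto simp: doubleton_eq_iff)
  qed
  ultimately show ?thesis unfolding A_count_def by (simp add: card_image)
qed

lemma touching_pairD:
  assumes "(e, f) \<in> touching_pairs"
  obtains k l where "k \<in> {1..n}" "k \<notin> e" "e \<union> f = insert k e"
    "l \<in> {1..n}" "l \<notin> f" "e \<union> f = insert l f"
proof -
  have ef: "e \<in> Q1" "f \<in> Q2" "e \<noteq> f" and "e \<inter> f \<noteq> {}"
    using assms unfolding touching_pairs_def by auto
  then obtain v where v: "v \<in> e" "v \<in> f" by blast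
  have e: "card e = 2" "e \<subseteq> {1..n}" and f: "card f = 2" "f \<subseteq> {1..n}"
    using edges_onD[OF edges1 ef(1)] edges_onD[OF edges2 ef(2)] by auto
  obtain k where "f = {v, k}" "k \<notin> e" "e \<union> f = insert k e"
    using doubleton_share_node[OF e(1) f(1) ef(3) v] .
  moreover obtain l where "e = {v, l}" "l \<notin> f" "f \<union> e = insert l f"
    using doubleton_share_node[OF f(1) e(1) ef(3)[symmetric] v(2,1)] .
  moreover have "e \<union> f = f \<union> e" by blast
  ultimately show ?thesis using e(2) f(2) that[of k l] by auto
qed

lemma edge_var_monom_eq_touching:
  assumes "e \<in> Q1" "f \<in> Q2" "e \<noteq> f" and eq: "edge_var_monom e k = edge_var_monom f l"
  shows "(e, f) \<in> touching_pairs" "edge_var_monom e k = monom_of_set (e \<union> f)"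
proof -
  have e: "card e = 2" "finite e" and f: "card f = 2" "finite f"
    using edges_onD[OF edges1 assms(1)] edges_onD[OF edges2 assms(2)] by auto
  then have "insert k e = insert l f" using arg_cong[OF eq, of Poly_Mapping.keys] by simp
  note facts = doubleton_insert_eq[OF e(1) f(1) assms(3) this]
  then show "(e, f) \<in> touching_pairs" using assms(1-3) unfolding touching_pairs_def by blast
  show "edge_var_monom e k = monom_of_set (e \<union> f)"
    using facts(1,2) e(2) by (simp add: edge_var_monom_insert)
qed

lemma touching_pair_monom_in_both:
  assumes "(e, f) \<in> touching_pairs"
  shows "monom_of_set (e \<union> f) \<in> case_prod edge_var_monom ` (Q1 \<times> {1..n})"
    "monom_of_set (e \<union> f) \<in> case_prod edge_var_monom ` (Q2 \<times> {1..n})"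
proof -
  have ef: "e \<in> Q1" "f \<in> Q2" "finite e" "finite f"
    using assms edges_onD[OF edges1] edges_onD[OF edges2] unfolding touching_pairs_def by auto
  obtain k l where "k \<in> {1..n}" "k \<notin> e" "e \<union> f = insert k e"
    "l \<in> {1..n}" "l \<notin> f" "e \<union> f = insert l f"
    using touching_pairD[OF assms] .
  then have "monom_of_set (e \<union> f) = edge_var_monom e k" "monom_of_set (e \<union> f) = edge_var_monom f l"
    using ef by (simp_all add: edge_var_monom_insert)
  then show "monom_of_set (e \<union> f) \<in> case_prod edge_var_monom ` (Q1 \<times> {1..n})"
    "monom_of_set (e \<union> f) \<in> case_prod edge_var_monom ` (Q2 \<times> {1..n})"
    using ef \<open>k \<in> {1..n}\<close> \<open>l \<in> {1..n}\<close>
    by (auto intro: rev_image_eqI[of "(e, k)"] rev_image_eqI[of "(f, l)"])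
qed

lemma edge_var_monoms_Int:
  "case_prod edge_var_monom ` (Q1 \<times> {1..n}) \<inter> case_prod edge_var_monom ` (Q2 \<times> {1..n})
    = case_prod edge_var_monom ` ((Q1 \<inter> Q2) \<times> {1..n}) \<union> (\<lambda>(e, f). monom_of_set (e \<union> f)) ` touching_pairs"
  (is "?C1 \<inter> ?C2 = ?C12 \<union> ?P")
proof (intro equalityI subsetI)
  fix m assume "m \<in> ?C1 \<inter> ?C2"
  then obtain e k f l where ek: "e \<in> Q1" "k \<in> {1..n}" "m = edge_var_monom e k"
    and fl: "f \<in> Q2" "l \<in> {1..n}" "m = edge_var_monom f l"
    by auto
  show "m \<in> ?C12 \<union> ?P"
  proof (cases "e = f")
    case True
    then show ?thesis using ek fl by auto
  next
    case False
    then show ?thesis using edge_var_monom_eq_touching[OF ek(1) fl(1) False] ek(3) fl(3) by force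
  qed
next
  fix m assume "m \<in> ?C12 \<union> ?P"
  then show "m \<in> ?C1 \<inter> ?C2" using touching_pair_monom_in_both by auto
qed

lemma card_touching_pair_monoms:
  "card ((\<lambda>(e, f). monom_of_set (e \<union> f)) ` touching_pairs) = card touching_pairs"
proof (rule card_image, rule inj_onI, clarify)
  fix e f e' f' assume tp: "(e, f) \<in> touching_pairs" "(e', f') \<in> touching_pairs"
    and eq: "monom_of_set (e \<union> f) = monom_of_set (e' \<union> f')"
  have in_Q: "e \<in> Q1" "f \<in> Q2" "e' \<in> Q1" "f' \<in> Q2" using tp unfolding touching_pairs_def by auto
  then have fin: "finite e" "finite f" "finite e'" "finite f'"
    using edges_onD[OF edges1] edges_onD[OF edges2] by auto
  then have union_eq: "e \<union> f = e' \<union> f'" using arg_cong[OF eq, of Poly_Mapping.keys] by simp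
  obtain k where "k \<notin> e" "e \<union> f = insert k e" using touching_pairD[OF tp(1)] by metis
  then have small: "card (e \<union> f) \<le> 3" "finite (e \<union> f)"
    using fin edges_onD[OF edges1 in_Q(1)] by simp_all
  have "e \<union> e' \<subseteq> e \<union> f" "f \<union> f' \<subseteq> e \<union> f" using union_eq by blast+
  then show "e = e' \<and> f = f'"
    using matching_eq_if_within_3[OF matching1 edges1 in_Q(1,3) _ small(2,1)]
      matching_eq_if_within_3[OF matching2 edges2 in_Q(2,4) _ small(2,1)]
    by blast
qed

lemma common_edge_monoms_disjoint:
  "case_prod edge_var_monom ` ((Q1 \<inter> Q2) \<times> {1..n}) \<inter> (\<lambda>(e, f). monom_of_set (e \<union> f)) ` touching_pairs = {}"
proof (rule ccontr)
  assume "\<not> ?thesis"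
  then obtain e k e' f' where e: "e \<in> Q1" "e \<in> Q2" and tp: "(e', f') \<in> touching_pairs"
    and eq: "edge_var_monom e k = monom_of_set (e' \<union> f')"
    by force
  have in_Q: "e' \<in> Q1" "f' \<in> Q2" "e' \<noteq> f'" using tp unfolding touching_pairs_def by auto
  then have fin: "finite e" "finite e'" "finite f'"
    using edges_onD[OF edges1] edges_onD[OF edges2] e by auto
  then have union_eq: "insert k e = e' \<union> f'" using arg_cong[OF eq, of Poly_Mapping.keys] by simp
  obtain l where "l \<notin> e'" "e' \<union> f' = insert l e'" using touching_pairD[OF tp] by metis
  then have small: "card (e' \<union> f') \<le> 3" "finite (e' \<union> f')"
    using fin edges_onD[OF edges1 in_Q(1)] by simp_all
  have "e \<union> e' \<subseteq> e' \<union> f'" "e \<union> f' \<subseteq> e' \<union> f'" using union_eq by blast+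
  then have "e = e'" "e = f'"
    using matching_eq_if_within_3[OF matching1 edges1 e(1) in_Q(1) _ small(2,1)]
      matching_eq_if_within_3[OF matching2 edges2 e(2) in_Q(2) _ small(2,1)]
    by blast+
  then show False using in_Q(3) by simp
qed

lemma inj_on_monom_of_set_edges: "inj_on monom_of_set (Q1 \<union> Q2)"
  by (rule inj_on_subset[OF inj_on_monom_of_set]) (use edges_onD[OF edges1] edges_onD[OF edges2] in blast)

lemma edge_monoms_4_Int:
  "edge_monoms n 4 Q1 \<inter> edge_monoms n 4 Q2
     = monom_of_set ` (Q1 \<inter> Q2) \<union> (case_prod edge_var_monom ` ((Q1 \<inter> Q2) \<times> {1..n})
         \<union> (\<lambda>(e, f). monom_of_set (e \<union> f)) ` touching_pairs)"
proof -
  let ?C = "\<lambda>Q. case_prod edge_var_monom ` (Q \<times> {1..n})"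
  have "(monom_of_set ` Q1 \<union> monom_of_set ` Q2) \<inter> (?C Q1 \<union> ?C Q2) = {}"
    using monom_of_set_edge_var_monom_disjoint[OF edges1 edges1]
      monom_of_set_edge_var_monom_disjoint[OF edges1 edges2]
      monom_of_set_edge_var_monom_disjoint[OF edges2 edges1]
      monom_of_set_edge_var_monom_disjoint[OF edges2 edges2]
    by (simp add: Int_Un_distrib Int_Un_distrib2)
  then have "edge_monoms n 4 Q1 \<inter> edge_monoms n 4 Q2
      = (monom_of_set ` Q1 \<inter> monom_of_set ` Q2) \<union> (?C Q1 \<inter> ?C Q2)"
    unfolding edge_monoms_4[OF edges1] edge_monoms_4[OF edges2] by (rule Un_Int_Un_if_disjoint)
  also have "monom_of_set ` Q1 \<inter> monom_of_set ` Q2 = monom_of_set ` (Q1 \<inter> Q2)"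
    using inj_on_image_Int[OF inj_on_monom_of_set_edges, of Q1 Q2] by blast
  also have "?C Q1 \<inter> ?C Q2 = ?C (Q1 \<inter> Q2) \<union> (\<lambda>(e, f). monom_of_set (e \<union> f)) ` touching_pairs"
    by (rule edge_var_monoms_Int)
  finally show ?thesis .
qed

lemma card_edge_monoms_4_Int:
  "card (edge_monoms n 4 Q1 \<inter> edge_monoms n 4 Q2) = (n + 1) * card (Q1 \<inter> Q2) + card touching_pairs"
proof -
  let ?C = "case_prod edge_var_monom ` ((Q1 \<inter> Q2) \<times> {1..n})"
    and ?P = "(\<lambda>(e, f). monom_of_set (e \<union> f)) ` touching_pairs"
  have "?C \<union> ?P \<subseteq> case_prod edge_var_monom ` (Q1 \<times> {1..n})"
    unfolding edge_var_monoms_Int[symmetric] by (rule Int_lower1)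
  moreover have "monom_of_set ` (Q1 \<inter> Q2) \<subseteq> monom_of_set ` Q1" by (rule image_mono) simp
  ultimately have "monom_of_set ` (Q1 \<inter> Q2) \<inter> (?C \<union> ?P) = {}"
    using monom_of_set_edge_var_monom_disjoint[OF edges1 edges1] by blast
  then have "card (edge_monoms n 4 Q1 \<inter> edge_monoms n 4 Q2)
      = card (monom_of_set ` (Q1 \<inter> Q2)) + (card ?C + card ?P)"
    unfolding edge_monoms_4_Int using common_edge_monoms_disjoint finite1 finite_touching_pairs
    by (simp add: card_Un_disjoint)
  also have "card (monom_of_set ` (Q1 \<inter> Q2)) = card (Q1 \<inter> Q2)"
    using inj_on_subset[OF inj_on_monom_of_set_edges] by (intro card_image) auto
  also have "card ?C = card (Q1 \<inter> Q2) * n"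
    using inj_on_subset[OF inj_on_edge_var_monom[OF matching1 edges1], of "(Q1 \<inter> Q2) \<times> {1..n}"]
    by (simp add: card_image card_cartesian_product Sigma_mono)
  finally show ?thesis using card_touching_pair_monoms by simp
qed

theorem card_symdiff_edge_monoms_4:
  "card (symdiff (edge_monoms n 4 Q1) (edge_monoms n 4 Q2)) + 2 * A_count (Q1 \<union> Q2)
     = (n + 1) * card (symdiff Q1 Q2)"
proof -
  let ?X = "card (symdiff (edge_monoms n 4 Q1) (edge_monoms n 4 Q2))"
    and ?I = "card (Q1 \<inter> Q2)" and ?T = "card touching_pairs"
  have "?X + 2 * ((n + 1) * ?I + ?T) = (n + 1) * card Q1 + (n + 1) * card Q2"
    using card_symdiff_add_card_Int[OF finite_edge_monoms finite_edge_monoms, of n 4 Q1 n 4 Q2]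
    by (simp only: card_edge_monoms_4_Int card_edge_monoms_4 matching1 matching2 edges1 edges2)
  also have "\<dots> = (n + 1) * card (symdiff Q1 Q2) + 2 * ((n + 1) * ?I)"
    using card_symdiff_add_card_Int[OF finite1 finite2] by (metis distrib_left mult.left_commute)
  finally show ?thesis unfolding A_count_eq_card_touching_pairs by simp
qed

end

section \<open>Connected 2-regular graphs are cycles\<close>

locale two_regular_graph =
  fixes S :: "'a set" and N :: "'a \<Rightarrow> 'a set"
  assumes finite_S: "finite S"
    and nbr_sym: "u \<in> N v \<Longrightarrow> v \<in> N u"
    and nbr_irrefl: "v \<notin> N v"
    and nbr_closed: "v \<in> S \<Longrightarrow> N v \<subseteq> S"
    and card_nbr: "v \<in> S \<Longrightarrow> card (N v) = 2"
begin

lemma nbr_eq_pair: "v \<in> S \<Longrightarrow> a \<in> N v \<Longrightarrow> b \<in> N v \<Longrightarrow> a \<noteq> b \<Longrightarrow> N v = {a, b}"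
  using card_nbr by (metis card_2_iff empty_iff insertE insert_commute)

definition next_node :: "'a \<Rightarrow> 'a \<Rightarrow> 'a" where
  "next_node a b = (SOME c. c \<in> N b \<and> c \<noteq> a)"

lemma next_node_spec: assumes "b \<in> S" shows "next_node a b \<in> N b" "next_node a b \<noteq> a"
proof -
  obtain x y where "N b = {x, y}" "x \<noteq> y" using card_nbr[OF assms] card_2_iff by metis
  then have "\<exists>c. c \<in> N b \<and> c \<noteq> a" by blast
  from someI_ex[OF this] show "next_node a b \<in> N b" "next_node a b \<noteq> a"
    unfolding next_node_def by blast+
qed

fun walk :: "'a \<Rightarrow> 'a \<Rightarrow> nat \<Rightarrow> 'a" where
  "walk r s 0 = r"
| "walk r s (Suc 0) = s"
| "walk r s (Suc (Suc k)) = next_node (walk r s k) (walk r s (Suc k))"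

context
  fixes r s assumes r: "r \<in> S" and s: "s \<in> N r"
begin

lemma walk_step: "walk r s k \<in> S \<and> walk r s (Suc k) \<in> N (walk r s k)"
proof (induction k)
  case 0
  then show ?case using r s by simp
next
  case (Suc k)
  then have "walk r s (Suc k) \<in> S" using nbr_closed by blast
  then show ?case using next_node_spec(1) by simp
qed

lemma walk_no_loop: "walk r s (Suc k) \<noteq> walk r s k"
  using walk_step[of k] nbr_irrefl by metis

lemma walk_no_backtrack: "walk r s (Suc (Suc k)) \<noteq> walk r s k"
  using next_node_spec(2) walk_step[of "Suc k"] by simp

lemma walk_nbrs: "N (walk r s (Suc k)) = {walk r s k, walk r s (Suc (Suc k))}"
proof (rule nbr_eq_pair)
  show "walk r s (Suc k) \<in> S" "walk r s (Suc (Suc k)) \<in> N (walk r s (Suc k))"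
    using walk_step[of "Suc k"] by auto
  show "walk r s k \<in> N (walk r s (Suc k))" using walk_step[of k] nbr_sym by blast
  show "walk r s k \<noteq> walk r s (Suc (Suc k))" using walk_no_backtrack by metis
qed

text \<open>The first repeated node of the walk is its start: any other first repetition would give
  that node three distinct neighbours.\<close>
lemma walk_first_repeat:
  assumes inj: "inj_on (walk r s) {..<j}" and i: "i < j" "walk r s i = walk r s j"
  shows "i = 0"
proof (rule ccontr)
  let ?w = "walk r s"
  assume "i \<noteq> 0"
  then obtain i' where i': "i = Suc i'" using not0_implies_Suc by blast
  have "j \<noteq> Suc i" "j \<noteq> Suc (Suc i)" using i(2) walk_no_loop walk_no_backtrack by metis+
  then obtain p where p: "j = Suc p" "Suc i < p" using i(1) by (cases j) auto
  have "?w p \<in> N (?w i)" using walk_step[of p] nbr_sym p(1) i(2) by simp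
  then consider "?w p = ?w i'" | "?w p = ?w (Suc i)" using walk_nbrs[of i'] i' by auto
  then show False
  proof cases
    case 1
    then have "p = i'" using inj_onD[OF inj] p i' by simp
    then show False using p i' by simp
  next
    case 2
    then have "p = Suc i" using inj_onD[OF inj] p by simp
    then show False using p by simp
  qed
qed

lemma walk_returns:
  obtains j where "3 \<le> j" "walk r s j = r" "inj_on (walk r s) {..<j}"
proof -
  let ?w = "walk r s"
  have "range ?w \<subseteq> S" using walk_step by blast
  then have "\<not> inj ?w" using finite_S by (meson finite_imageD finite_subset infinite_UNIV_nat)
  then have "\<exists>j. \<exists>i<j. ?w i = ?w j" unfolding inj_def by (metis linorder_neqE_nat)
  define j where "j = (LEAST j. \<exists>i<j. ?w i = ?w j)"
  have "\<exists>i<j. ?w i = ?w j" unfolding j_def by (rule LeastI_ex) fact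
  then obtain i where i: "i < j" "?w i = ?w j" by blast
  have first: "j \<le> b" if "a < b" "?w a = ?w b" for a b
    unfolding j_def using that by (blast intro: Least_le)
  have inj: "inj_on ?w {..<j}"
  proof (rule inj_onI, rule ccontr)
    fix a b assume "a \<in> {..<j}" "b \<in> {..<j}" "?w a = ?w b" "a \<noteq> b"
    then show False using first[of a b] first[of b a] by (auto simp: neq_iff)
  qed
  have "i = 0" by (rule walk_first_repeat[OF inj i])
  with i have "?w j = r" by simp
  moreover have "j \<noteq> 1" "j \<noteq> 2"
    using \<open>?w j = r\<close> walk_no_loop[of 0] walk_no_backtrack[of 0] by (auto simp: numeral_2_eq_2)
  moreover have "3 \<le> j" using \<open>j \<noteq> 1\<close> \<open>j \<noteq> 2\<close> i(1) by linarith
  ultimately show ?thesis using that inj by blast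
qed

lemma walk_cycle_closed:
  assumes j: "3 \<le> j" "walk r s j = r" "inj_on (walk r s) {..<j}"
    and a: "a \<in> walk r s ` {..<j}" and b: "b \<in> N a"
  shows "b \<in> walk r s ` {..<j}"
proof -
  let ?w = "walk r s"
  obtain k where k: "k < j" "a = ?w k" using a by blast
  have next_in: "?w (Suc k) \<in> ?w ` {..<j}"
  proof (cases "Suc k = j")
    case True
    then have "?w (Suc k) = ?w 0" using j(2) by simp
    then show ?thesis using j(1) by (intro rev_image_eqI[of 0]) simp_all
  next
    case False
    then show ?thesis using k(1) by simp
  qed
  show ?thesis
  proof (cases k)
    case 0
    have "?w (j - 1) \<in> N r" using walk_step[of "j - 1"] j nbr_sym by (simp add: Suc_diff_le)
    moreover have "?w 1 \<noteq> ?w (j - 1)" using inj_onD[OF j(3), of 1 "j - 1"] j(1) by auto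
    ultimately have "N r = {?w 1, ?w (j - 1)}" using nbr_eq_pair r s by simp
    then have "b = ?w (Suc k) \<or> b = ?w (j - 1)" using b k 0 by simp
    moreover have "?w (j - 1) \<in> ?w ` {..<j}" using j(1) by simp
    ultimately show ?thesis using next_in by blast
  next
    case (Suc k')
    then have "b = ?w k' \<or> b = ?w (Suc k)" using b k walk_nbrs[of k'] by simp
    moreover have "?w k' \<in> ?w ` {..<j}" using k(1) Suc by simp
    ultimately show ?thesis using next_in by blast
  qed
qed

end

lemma connected_imp_cycle:
  assumes r: "r \<in> S"
    and connected: "\<And>T. r \<in> T \<Longrightarrow> (\<And>a b. a \<in> T \<Longrightarrow> b \<in> N a \<Longrightarrow> b \<in> T) \<Longrightarrow> S \<subseteq> T"
  obtains xs where "distinct xs" "set xs = S" "\<forall>k < length xs. xs ! ((k + 1) mod length xs) \<in> N (xs ! k)"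
proof -
  obtain s where s: "s \<in> N r" using card_nbr[OF r] by (metis card.empty ex_in_conv zero_neq_numeral)
  let ?w = "walk r s"
  obtain j where j: "3 \<le> j" "?w j = r" "inj_on ?w {..<j}" using walk_returns[OF r s] .
  define xs where "xs = map ?w [0..<j]"
  have len: "length xs = j" and nth: "k < j \<Longrightarrow> xs ! k = ?w k" for k
    unfolding xs_def by simp_all
  have set_xs: "set xs = ?w ` {..<j}" unfolding xs_def by auto
  have "S \<subseteq> ?w ` {..<j}"
  proof (rule connected)
    show "r \<in> ?w ` {..<j}" using j(1) by (intro rev_image_eqI[of 0]) simp_all
    show "b \<in> ?w ` {..<j}" if "a \<in> ?w ` {..<j}" "b \<in> N a" for a b
      using walk_cycle_closed[OF r s j that] .
  qed
  then have "S \<subseteq> set xs" unfolding set_xs .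
  moreover have "set xs \<subseteq> S" using set_xs walk_step[OF r s] by auto
  moreover have "distinct xs" using j(3) unfolding xs_def by (simp add: distinct_map atLeast0LessThan)
  moreover have "xs ! ((k + 1) mod j) = ?w (Suc k)" if "k < j" for k
    using that j(1,2) nth by (cases "Suc k = j") auto
  then have "\<forall>k < length xs. xs ! ((k + 1) mod length xs) \<in> N (xs ! k)"
    using len nth walk_step[OF r s] by simp
  ultimately show ?thesis using that by blast
qed

end

section \<open>Orbits of two matchings\<close>

definition incident :: "nat set set \<Rightarrow> nat \<Rightarrow> nat set set" where
  "incident Q v = {e \<in> Q. v \<in> e}"

lemma incident_matching: "matching Q \<Longrightarrow> e \<in> Q \<Longrightarrow> v \<in> e \<Longrightarrow> incident Q v = {e}"
  unfolding incident_def matching_def by blast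

lemma incident_matching_cases:
  assumes "matching Q" obtains "incident Q v = {}" | e where "incident Q v = {e}"
proof (cases "\<exists>e\<in>Q. v \<in> e")
  case True
  then obtain e where "e \<in> Q" "v \<in> e" by blast
  then show ?thesis by (rule that(2)[OF incident_matching[OF assms]])
next
  case False
  then show ?thesis by (intro that(1)) (auto simp: incident_def)
qed

lemma card_incident_matching:
  assumes "matching Q" shows "card (incident Q v) = (if \<exists>e\<in>Q. v \<in> e then 1 else 0)"
proof (cases "\<exists>e\<in>Q. v \<in> e")
  case True
  then obtain e where "e \<in> Q" "v \<in> e" by blast
  then show ?thesis using incident_matching[OF assms] True by simp
next
  case False
  then have "incident Q v = {}" unfolding incident_def by blast
  then show ?thesis using False by simp
qed

lemma sum_card_incident:
  assumes "finite V" "finite E" "\<forall>e\<in>E. e \<subseteq> V"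
  shows "(\<Sum>v\<in>V. card (incident E v)) = (\<Sum>e\<in>E. card e)"
proof -
  have "(\<Sum>v\<in>V. card (incident E v)) = (\<Sum>v\<in>V. \<Sum>e\<in>E. if v \<in> e then 1 else 0)"
    using assms(2) by (simp add: incident_def sum.If_cases Int_def)
  also have "\<dots> = (\<Sum>e\<in>E. \<Sum>v\<in>V. if v \<in> e then 1 else 0)" by (rule sum.swap)
  also have "\<dots> = (\<Sum>e\<in>E. card e)"
    using assms by (intro sum.cong) (auto simp: sum.If_cases Int_absorb1)
  finally show ?thesis .
qed

context two_matchings
begin

definition degree :: "nat \<Rightarrow> nat" where
  "degree v = card (incident Q1 v) + card (incident Q2 v)"

definition ends :: "nat set" where
  "ends = {v \<in> {1..n}. degree v = 1}"

definition junctions :: "nat set" where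
  "junctions = {v \<in> {1..n}. \<exists>e\<in>Q1. \<exists>f\<in>Q2. v \<in> e \<and> v \<in> f \<and> e \<noteq> f}"

lemma edge_in_range: "e \<in> Q1 \<union> Q2 \<Longrightarrow> e \<subseteq> {1..n} \<and> card e = 2 \<and> finite e"
  using edges_onD[OF edges1] edges_onD[OF edges2] by blast

lemma degree_le_2: "degree v \<le> 2"
  unfolding degree_def by (simp add: card_incident_matching matching1 matching2)

lemma card_junctions: "card junctions = card touching_pairs"
proof -
  define edge_at :: "nat set set \<Rightarrow> nat \<Rightarrow> nat set"
    where "edge_at Q v = (THE e. e \<in> Q \<and> v \<in> e)" for Q v
  have edge_at: "edge_at Q v = e" if "matching Q" "e \<in> Q" "v \<in> e" for Q v e
    unfolding edge_at_def using that by (intro the_equality) (auto simp: matching_def)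
  have "bij_betw (\<lambda>v. (edge_at Q1 v, edge_at Q2 v)) junctions touching_pairs"
  proof (rule bij_betw_imageI)
    show "inj_on (\<lambda>v. (edge_at Q1 v, edge_at Q2 v)) junctions"
    proof (rule inj_onI)
      fix v w assume "v \<in> junctions" "w \<in> junctions"
        and eq: "(edge_at Q1 v, edge_at Q2 v) = (edge_at Q1 w, edge_at Q2 w)"
      then obtain e f e' f' where ef: "e \<in> Q1" "f \<in> Q2" "v \<in> e" "v \<in> f" "e \<noteq> f"
        and ef': "e' \<in> Q1" "f' \<in> Q2" "w \<in> e'" "w \<in> f'"
        unfolding junctions_def by blast
      then have "e = e'" "f = f'" using eq edge_at matching1 matching2 by auto
      have "card e = 2" "card f = 2" using edge_in_range ef(1,2) by blast+
      then obtain k where "f = {v, k}" "k \<notin> e"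
        using doubleton_share_node ef(3-5) by metis
      then show "v = w" using ef ef' \<open>e = e'\<close> \<open>f = f'\<close> by auto
    qed
    show "(\<lambda>v. (edge_at Q1 v, edge_at Q2 v)) ` junctions = touching_pairs"
    proof (intro equalityI subsetI)
      fix x assume "x \<in> (\<lambda>v. (edge_at Q1 v, edge_at Q2 v)) ` junctions"
      then show "x \<in> touching_pairs"
        unfolding junctions_def touching_pairs_def using edge_at matching1 matching2 by auto
    next
      fix x assume "x \<in> touching_pairs"
      then obtain e f v where "x = (e, f)" "e \<in> Q1" "f \<in> Q2" "e \<noteq> f" "v \<in> e" "v \<in> f"
        unfolding touching_pairs_def by blast
      moreover then have "v \<in> junctions" unfolding junctions_def using edge_in_range by blast
      ultimately show "x \<in> (\<lambda>v. (edge_at Q1 v, edge_at Q2 v)) ` junctions"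
        using edge_at matching1 matching2 by (auto intro!: image_eqI[of _ _ v])
    qed
  qed
  then show ?thesis by (rule bij_betw_same_card)
qed

lemma incident_symdiff_count:
  assumes "v \<in> {1..n}"
  shows "card (incident (symdiff Q1 Q2) v) = (if v \<in> ends then 1 else 0) + (if v \<in> junctions then 2 else 0)"
proof -
  have split: "incident (symdiff Q1 Q2) v
      = (incident Q1 v - incident Q2 v) \<union> (incident Q2 v - incident Q1 v)"
    unfolding incident_def symdiff_def by auto
  have junction_iff: "v \<in> junctions \<longleftrightarrow> (\<exists>e\<in>incident Q1 v. \<exists>f\<in>incident Q2 v. e \<noteq> f)"
    using assms unfolding junctions_def incident_def by blast
  have end_iff: "v \<in> ends \<longleftrightarrow> card (incident Q1 v) + card (incident Q2 v) = 1"
    using assms unfolding ends_def degree_def by simp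
  show ?thesis
  proof (cases rule: incident_matching_cases[OF matching1, of v];
         cases rule: incident_matching_cases[OF matching2, of v])
  qed (simp_all add: split junction_iff end_iff card_insert_if)
qed

lemma double_card_symdiff: "2 * card (symdiff Q1 Q2) = card ends + 2 * card junctions"
proof -
  have fin: "finite (symdiff Q1 Q2)" using finite1 finite2 unfolding symdiff_def by simp
  have edges: "e \<subseteq> {1..n} \<and> card e = 2" if "e \<in> symdiff Q1 Q2" for e
    using that edge_in_range unfolding symdiff_def by blast
  have "2 * card (symdiff Q1 Q2) = (\<Sum>e\<in>symdiff Q1 Q2. card e)" using edges by simp
  also have "\<dots> = (\<Sum>v\<in>{1..n}. card (incident (symdiff Q1 Q2) v))"
    using edges fin by (intro sum_card_incident[symmetric]) auto
  also have "\<dots> = (\<Sum>v\<in>{1..n}. (if v \<in> ends then 1 else 0) + (if v \<in> junctions then 2 else 0))"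
    by (intro sum.cong) (simp_all add: incident_symdiff_count)
  also have "\<dots> = card ({1..n} \<inter> ends) + 2 * card ({1..n} \<inter> junctions)"
    by (simp add: sum.distrib sum.If_cases)
  also have "{1..n} \<inter> ends = ends" unfolding ends_def by auto
  also have "{1..n} \<inter> junctions = junctions" unfolding junctions_def by auto
  finally show ?thesis .
qed

definition nbrs :: "nat \<Rightarrow> nat set" where
  "nbrs v = {u. {v, u} \<in> Q1 \<union> Q2}"

definition component :: "nat \<Rightarrow> nat set" where
  "component v = {u \<in> {1..n}. (v, u) \<in> (adj_rel (Q1 \<union> Q2))\<^sup>*}"

lemma orbits_eq: "orbits n Q1 Q2 = component ` {1..n}"
  unfolding orbits_def component_def by auto

lemma adj_rel_iff: "(a, b) \<in> adj_rel (Q1 \<union> Q2) \<longleftrightarrow> b \<in> nbrs a"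
  unfolding adj_rel_def nbrs_def by simp

lemma nbrs_sym: "u \<in> nbrs v \<Longrightarrow> v \<in> nbrs u"
  unfolding nbrs_def by (simp add: insert_commute)

lemma nbrs_range:
  assumes "u \<in> nbrs v" shows "u \<in> {1..n} \<and> v \<in> {1..n} \<and> u \<noteq> v"
proof -
  have "{v, u} \<subseteq> {1..n}" "card {v, u} = 2" using assms edge_in_range unfolding nbrs_def by blast+
  then show ?thesis by (cases "u = v") auto
qed

lemma finite_nbrs: "finite (nbrs v)"
  using nbrs_range by (blast intro: finite_subset[of _ "{1..n}"])

lemma component_self: "v \<in> {1..n} \<Longrightarrow> v \<in> component v"
  unfolding component_def by simp

lemma component_subset: "component v \<subseteq> {1..n}"
  unfolding component_def by auto

lemma finite_component: "finite (component v)"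
  using component_subset by (rule finite_subset) simp

lemma component_eq: "u \<in> component v \<Longrightarrow> component u = component v"
proof -
  have "sym (adj_rel (Q1 \<union> Q2))" unfolding sym_def adj_rel_def by (simp add: insert_commute)
  then have "sym ((adj_rel (Q1 \<union> Q2))\<^sup>*)" by (rule sym_rtrancl)
  then show "u \<in> component v \<Longrightarrow> component u = component v"
    unfolding component_def by (auto dest: symD intro: rtrancl_trans)
qed

lemma nbrs_component: "v \<in> component r \<Longrightarrow> nbrs v \<subseteq> component r"
  unfolding component_def using nbrs_range adj_rel_iff by (auto intro: rtrancl_into_rtrancl)

lemma component_minimal:
  assumes "v \<in> component r" "v \<in> T" "\<And>a b. a \<in> T \<Longrightarrow> b \<in> nbrs a \<Longrightarrow> b \<in> T"
  shows "component r \<subseteq> T"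
proof
  fix x assume "x \<in> component r"
  then have "(v, x) \<in> (adj_rel (Q1 \<union> Q2))\<^sup>*"
    using component_eq[OF assms(1)] unfolding component_def by auto
  then show "x \<in> T"
    by (induction rule: rtrancl_induct) (use assms(2,3) adj_rel_iff in blast)+
qed

lemma edge_subset_component:
  assumes "v \<in> component r" "e \<in> Q1 \<union> Q2" "v \<in> e"
  shows "e \<subseteq> component r"
proof
  fix u assume "u \<in> e"
  obtain a b where "e = {a, b}" using edge_in_range[OF assms(2)] card_2_iff by metis
  then have "u = v \<or> e = {v, u}" using assms(3) \<open>u \<in> e\<close> by auto
  then have "u = v \<or> u \<in> nbrs v" using assms(2) unfolding nbrs_def by auto
  then show "u \<in> component r" using assms(1) nbrs_component by blast
qed

lemma card_nbrs_le_degree: "card (nbrs v) \<le> degree v"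
proof -
  have "inj_on (\<lambda>u. {v, u}) (nbrs v)" by (rule inj_onI) (auto simp: doubleton_eq_iff)
  moreover have "(\<lambda>u. {v, u}) ` nbrs v \<subseteq> incident Q1 v \<union> incident Q2 v"
    unfolding nbrs_def incident_def by auto
  ultimately have "card (nbrs v) \<le> card (incident Q1 v \<union> incident Q2 v)"
    using finite1 finite2 by (intro card_inj_on_le) (auto simp: incident_def)
  also have "\<dots> \<le> degree v" unfolding degree_def by (rule card_Un_le)
  finally show ?thesis .
qed

text \<open>Every node v \<noteq> r of the component is joined to a parent that is strictly closer to r;
  the edges to the parents are pairwise distinct.\<close>
lemma card_component_le_edges:
  assumes r: "r \<in> {1..n}"
  shows "card (component r) \<le> card {e \<in> Q1 \<union> Q2. e \<subseteq> component r} + 1"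
proof -
  let ?R = "adj_rel (Q1 \<union> Q2)" and ?C = "component r"
  define dist where "dist v = (LEAST k. (r, v) \<in> ?R ^^ k)" for v
  have parent: "\<exists>u. (r, u) \<in> ?R ^^ (dist v - 1) \<and> (u, v) \<in> ?R \<and> dist v \<noteq> 0"
    if "v \<in> ?C - {r}" for v
  proof -
    have "\<exists>k. (r, v) \<in> ?R ^^ k" using that unfolding component_def by (auto simp: rtrancl_power)
    then have d: "(r, v) \<in> ?R ^^ dist v" unfolding dist_def by (rule LeastI_ex)
    then have "dist v \<noteq> 0" using that by (metis DiffE relpow_0_E singletonI)
    then show ?thesis using d by (metis Suc_diff_1 not_gr_zero relpow_Suc_E)
  qed
  define par where "par v = (SOME u. (r, u) \<in> ?R ^^ (dist v - 1) \<and> (u, v) \<in> ?R \<and> dist v \<noteq> 0)" for v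
  have par: "(r, par v) \<in> ?R ^^ (dist v - 1)" "(par v, v) \<in> ?R" "dist v \<noteq> 0" if "v \<in> ?C - {r}" for v
    using someI_ex[OF parent[OF that]] unfolding par_def by blast+
  have closer: "dist (par v) < dist v" if "v \<in> ?C - {r}" for v
    using Least_le[of "\<lambda>k. (r, par v) \<in> ?R ^^ k", OF par(1)[OF that]] par(3)[OF that]
    unfolding dist_def by linarith
  have par_in: "par v \<in> ?C" if "v \<in> ?C - {r}" for v
    using par[OF that] nbrs_range adj_rel_iff relpow_imp_rtrancl unfolding component_def by blast
  have "inj_on (\<lambda>v. {v, par v}) (?C - {r})"
  proof (rule inj_onI, rule ccontr)
    fix v w assume v: "v \<in> ?C - {r}" and w: "w \<in> ?C - {r}" and "{v, par v} = {w, par w}" "v \<noteq> w"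
    then have "v = par w" "w = par v" by (auto simp: doubleton_eq_iff)
    then show False using closer[OF v] closer[OF w] by simp
  qed
  moreover have "(\<lambda>v. {v, par v}) ` (?C - {r}) \<subseteq> {e \<in> Q1 \<union> Q2. e \<subseteq> ?C}"
    using par(2) par_in nbrs_sym adj_rel_iff unfolding nbrs_def by auto
  ultimately have "card (?C - {r}) \<le> card {e \<in> Q1 \<union> Q2. e \<subseteq> ?C}"
    using finite1 finite2 by (intro card_inj_on_le) auto
  then show ?thesis using component_self[OF r] finite_component by simp
qed

lemma sum_degree_component:
  "(\<Sum>v\<in>component r. degree v) = 2 * (card {e \<in> Q1. e \<subseteq> component r} + card {e \<in> Q2. e \<subseteq> component r})"
proof -
  have half: "(\<Sum>v\<in>component r. card (incident Q v)) = 2 * card {e \<in> Q. e \<subseteq> component r}"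
    if "Q \<subseteq> Q1 \<union> Q2" for Q
  proof -
    have "finite Q" using that finite1 finite2 by (meson finite_UnI finite_subset)
    have "incident Q v = incident {e \<in> Q. e \<subseteq> component r} v" if "v \<in> component r" for v
      using edge_subset_component[OF that] \<open>Q \<subseteq> Q1 \<union> Q2\<close> unfolding incident_def by blast
    then have "(\<Sum>v\<in>component r. card (incident Q v))
        = (\<Sum>v\<in>component r. card (incident {e \<in> Q. e \<subseteq> component r} v))"
      by simp
    also have "\<dots> = (\<Sum>e\<in>{e \<in> Q. e \<subseteq> component r}. card e)"
      using \<open>finite Q\<close> finite_component by (intro sum_card_incident) auto
    also have "\<dots> = (\<Sum>e\<in>{e \<in> Q. e \<subseteq> component r}. 2)"
      using edge_in_range that by (intro sum.cong) auto
    finally show ?thesis by simp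
  qed
  show ?thesis unfolding degree_def sum.distrib by (simp add: half)
qed

lemma degree_2_if_cyclic:
  assumes "cyclic_orbit Q1 Q2 (component r)" "v \<in> component r"
  shows "degree v = 2"
  using assms(1) unfolding cyclic_orbit_def
proof (elim disjE conjE exE)
  assume "component r \<in> Q1 \<inter> Q2"
  then have "incident Q1 v = {component r}" "incident Q2 v = {component r}"
    using incident_matching[OF matching1 _ assms(2)] incident_matching[OF matching2 _ assms(2)] by blast+
  then show ?thesis unfolding degree_def by simp
next
  fix xs assume "3 \<le> card (component r)" "distinct xs" "set xs = component r"
    and cycle: "\<forall>k<length xs. {xs ! k, xs ! ((k + 1) mod length xs)} \<in> Q1 \<union> Q2"
  define m where "m = length xs"
  have m3: "3 \<le> m"
    using distinct_card[OF \<open>distinct xs\<close>] \<open>set xs = _\<close> \<open>3 \<le> card _\<close> unfolding m_def by simp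
  have "v \<in> set xs" using assms(2) \<open>set xs = _\<close> by simp
  then obtain k where k: "k < m" "xs ! k = v" unfolding m_def in_set_conv_nth by blast
  define i where "i = (if Suc k = m then 0 else Suc k)"
  define j where "j = (if k = 0 then m - 1 else k - 1)"
  have i: "i < m" "(k + 1) mod m = i" and j: "j < m" "(j + 1) mod m = k" and "i \<noteq> j"
    using k m3 unfolding i_def j_def by auto
  have "{v, xs ! i} \<in> Q1 \<union> Q2" "{xs ! j, v} \<in> Q1 \<union> Q2"
    using cycle k i j unfolding m_def by metis+
  then have "xs ! i \<in> nbrs v" "xs ! j \<in> nbrs v" unfolding nbrs_def by (simp_all add: insert_commute)
  moreover have "xs ! i \<noteq> xs ! j"
    using \<open>distinct xs\<close> i j \<open>i \<noteq> j\<close> unfolding m_def by (simp add: nth_eq_iff_index_eq)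
  ultimately have "2 \<le> card (nbrs v)"
    using finite_nbrs card_mono[of "nbrs v" "{xs ! i, xs ! j}"] by simp
  then show ?thesis using card_nbrs_le_degree[of v] degree_le_2[of v] by linarith
qed

lemma degree_pos_iff: "0 < degree v \<longleftrightarrow> (\<exists>e\<in>Q1 \<union> Q2. v \<in> e)"
  unfolding degree_def by (auto simp: card_incident_matching matching1 matching2)

lemma degree_pos_in_component:
  assumes "2 \<le> card (component r)" "v \<in> component r"
  shows "0 < degree v"
proof -
  obtain x where "x \<in> component r" "x \<noteq> v"
    using assms by (metis card_le_Suc0_iff_eq finite_component not_less_eq_eq numeral_2_eq_2)
  then have "(v, x) \<in> (adj_rel (Q1 \<union> Q2))\<^sup>*" "x \<noteq> v"
    using component_eq[OF assms(2)] unfolding component_def by auto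
  then obtain y where "(v, y) \<in> adj_rel (Q1 \<union> Q2)" by (metis converse_rtranclE)
  then show ?thesis unfolding degree_pos_iff adj_rel_def by blast
qed

lemma degree_0_in_small_component:
  assumes "card (component r) < 2" "v \<in> component r"
  shows "degree v = 0"
proof (rule ccontr)
  assume "degree v \<noteq> 0"
  then obtain e where "e \<in> Q1 \<union> Q2" "v \<in> e" using degree_pos_iff by blast
  then have "card e \<le> card (component r)"
    using edge_subset_component[OF assms(2)] finite_component by (metis card_mono)
  then show False using assms(1) edge_in_range \<open>e \<in> Q1 \<union> Q2\<close> by fastforce
qed

lemma degree_eq_2D:
  assumes "degree v = 2"
  obtains e f where "e \<in> Q1" "v \<in> e" "f \<in> Q2" "v \<in> f"
proof -
  have "degree v = (if \<exists>e\<in>Q1. v \<in> e then 1 else 0) + (if \<exists>f\<in>Q2. v \<in> f then 1 else 0)"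
    unfolding degree_def by (simp add: card_incident_matching matching1 matching2)
  with assms that show ?thesis by (auto split: if_splits)
qed

lemma card_nbrs_eq_2:
  assumes "3 \<le> card (component r)" "v \<in> component r" "degree v = 2"
  shows "card (nbrs v) = 2"
proof -
  obtain e f where ef: "e \<in> Q1" "v \<in> e" "f \<in> Q2" "v \<in> f" using degree_eq_2D[OF assms(3)] .
  have card_ef: "card e = 2" "card f = 2" using edge_in_range ef(1,3) by blast+
  have "e \<noteq> f"
  proof
    assume "e = f"
    have "component r \<subseteq> e"
    proof (rule component_minimal[OF assms(2) ef(2)])
      fix a b assume "a \<in> e" "b \<in> nbrs a"
      then have "{a, b} \<in> Q1 \<union> Q2" unfolding nbrs_def by simp
      then have "{a, b} = e"
        using matching_eqI[OF matching1 _ ef(1), of "{a, b}" a] matching_eqI[OF matching2 _ ef(3), of "{a, b}" a]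
          \<open>a \<in> e\<close> \<open>e = f\<close> by blast
      then show "b \<in> e" by blast
    qed
    then have "card (component r) \<le> card e" using card_ef(1) by (intro card_mono) (auto intro: card_ge_0_finite)
    then show False using assms(1) card_ef(1) by simp
  qed
  obtain k where "f = {v, k}" "k \<notin> e" using doubleton_share_node[OF card_ef \<open>e \<noteq> f\<close> ef(2,4)] .
  moreover obtain l where "e = {v, l}" "l \<notin> f"
    using doubleton_share_node[OF card_ef(2,1) \<open>e \<noteq> f\<close>[symmetric] ef(4,2)] .
  ultimately have "k \<in> nbrs v" "l \<in> nbrs v" "k \<noteq> l" using ef unfolding nbrs_def by auto
  then have "card {k, l} \<le> card (nbrs v)" by (intro card_mono[OF finite_nbrs]) auto
  then have "2 \<le> card (nbrs v)" using \<open>k \<noteq> l\<close> by simp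
  then show ?thesis using card_nbrs_le_degree[of v] assms(3) by linarith
qed

lemma cyclic_if_degree_2:
  assumes r: "r \<in> {1..n}" and "2 \<le> card (component r)" and deg: "\<forall>v\<in>component r. degree v = 2"
  shows "cyclic_orbit Q1 Q2 (component r)"
proof (cases "card (component r) = 2")
  case True
  obtain e f where ef: "e \<in> Q1" "r \<in> e" "f \<in> Q2" "r \<in> f"
    using degree_eq_2D deg component_self[OF r] by blast
  then have "e \<subseteq> component r" "f \<subseteq> component r"
    using edge_subset_component component_self[OF r] by blast+
  moreover have "card e = 2" "card f = 2" using edge_in_range ef(1,3) by blast+
  ultimately have "e = component r" "f = component r"
    using True card_subset_eq[OF finite_component] by metis+
  then show ?thesis unfolding cyclic_orbit_def using True ef by auto
next
  case False
  then have three: "3 \<le> card (component r)" using assms(2) by simp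
  interpret G: two_regular_graph "component r" nbrs
  proof
    show "finite (component r)" by (rule finite_component)
    show "u \<in> nbrs v \<Longrightarrow> v \<in> nbrs u" for u v by (rule nbrs_sym)
    show "v \<notin> nbrs v" for v using nbrs_range by blast
    show "v \<in> component r \<Longrightarrow> nbrs v \<subseteq> component r" for v by (rule nbrs_component)
    show "v \<in> component r \<Longrightarrow> card (nbrs v) = 2" for v using card_nbrs_eq_2[OF three] deg by blast
  qed
  obtain xs where "distinct xs" "set xs = component r"
    "\<forall>k < length xs. xs ! ((k + 1) mod length xs) \<in> nbrs (xs ! k)"
    by (rule G.connected_imp_cycle[OF component_self[OF r] component_minimal[OF component_self[OF r]]])
  then show ?thesis unfolding cyclic_orbit_def using three
    by (intro disjI2 conjI exI[of _ xs]) (auto simp: nbrs_def)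
qed

text \<open>A linear orbit is a path: its degree sum 2|C| - #ends is twice its number of contacts,
  which is at least |C| - 1. Hence the number of ends is even and at most 2; it is positive
  because not every degree is 2.\<close>
lemma card_ends_linear_component:
  assumes r: "r \<in> {1..n}" and linear: "\<not> cyclic_orbit Q1 Q2 (component r)"
    and two: "2 \<le> card (component r)"
  shows "card (ends \<inter> component r) = 2"
proof -
  let ?C = "component r"
  let ?ends = "{v \<in> ?C. degree v = 1}"
    and ?K = "card {e \<in> Q1. e \<subseteq> ?C} + card {e \<in> Q2. e \<subseteq> ?C}"
  have "ends \<inter> ?C = ?ends" using component_subset unfolding ends_def by blast
  have deg: "degree v = 1 \<or> degree v = 2" if "v \<in> ?C" for v
    using degree_pos_in_component[OF two that] degree_le_2[of v] by linarith
  obtain v where "v \<in> ?C" "degree v \<noteq> 2" using cyclic_if_degree_2[OF r two] linear by blast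
  then have "v \<in> ?ends" using deg by blast
  moreover have "finite ?ends" using finite_component by simp
  ultimately have "1 \<le> card ?ends" by (auto simp: Suc_le_eq card_gt_0_iff)
  have "(\<Sum>v\<in>?C. degree v) + card ?ends = (\<Sum>v\<in>?C. degree v + (if degree v = 1 then 1 else 0))"
    using finite_component by (simp add: sum.distrib sum.If_cases Int_def)
  also have "\<dots> = (\<Sum>v\<in>?C. 2)" using deg by (intro sum.cong) auto
  finally have handshake: "2 * ?K + card ?ends = 2 * card ?C"
    using sum_degree_component by simp
  have "card ?C \<le> card {e \<in> Q1 \<union> Q2. e \<subseteq> ?C} + 1" by (rule card_component_le_edges[OF r])
  also have "{e \<in> Q1 \<union> Q2. e \<subseteq> ?C} = {e \<in> Q1. e \<subseteq> ?C} \<union> {e \<in> Q2. e \<subseteq> ?C}" by blast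
  also have "card \<dots> \<le> ?K" by (rule card_Un_le)
  finally have "card ?C \<le> ?K + 1" by simp
  with handshake \<open>1 \<le> card ?ends\<close> have "card ?ends = 2" by presburger
  with \<open>ends \<inter> ?C = ?ends\<close> show ?thesis by simp
qed

lemma card_ends_component:
  assumes r: "r \<in> {1..n}"
  shows "card (ends \<inter> component r)
           = (if \<not> cyclic_orbit Q1 Q2 (component r) \<and> 2 \<le> card (component r) then 2 else 0)"
proof (cases "\<not> cyclic_orbit Q1 Q2 (component r) \<and> 2 \<le> card (component r)")
  case True
  then show ?thesis using card_ends_linear_component[OF r] by simp
next
  case False
  have "degree v \<noteq> 1" if "v \<in> component r" for v
    using False degree_2_if_cyclic[OF _ that] degree_0_in_small_component[OF _ that]
    by (cases "cyclic_orbit Q1 Q2 (component r)") auto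
  then have "ends \<inter> component r = {}" unfolding ends_def by blast
  then show ?thesis using False by simp
qed

definition linear_orbits :: "nat set set" where
  "linear_orbits = {C \<in> orbits n Q1 Q2. \<not> cyclic_orbit Q1 Q2 C \<and> 2 \<le> card C}"

lemma card_ends: "card ends = 2 * card linear_orbits"
proof -
  have disjoint: "C \<inter> D = {}" if "C \<in> orbits n Q1 Q2" "D \<in> orbits n Q1 Q2" "C \<noteq> D" for C D
    using that component_eq unfolding orbits_eq by blast
  have "finite (orbits n Q1 Q2)" unfolding orbits_eq by simp
  have "ends = (\<Union>C\<in>orbits n Q1 Q2. ends \<inter> C)"
    unfolding orbits_eq using component_self by (auto simp: ends_def)
  also have "card \<dots> = (\<Sum>C\<in>orbits n Q1 Q2. card (ends \<inter> C))"
    by (rule card_UN_disjoint) (use \<open>finite (orbits n Q1 Q2)\<close> disjoint in \<open>auto simp: ends_def\<close>)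
  finally have "card ends = (\<Sum>C\<in>orbits n Q1 Q2. card (ends \<inter> C))" .
  also have "\<dots> = (\<Sum>C\<in>orbits n Q1 Q2. if C \<in> linear_orbits then 2 else 0)"
    unfolding linear_orbits_def orbits_eq by (intro sum.cong) (auto simp: card_ends_component)
  also have "\<dots> = 2 * card linear_orbits"
    unfolding linear_orbits_def orbits_eq by (simp add: sum.If_cases Int_def)
  finally show ?thesis .
qed

lemma Lambda_ge_2_eq: "Lambda_ge n Q1 Q2 2 = card linear_orbits"
proof -
  let ?L = "\<lambda>m. {C \<in> orbits n Q1 Q2. card C = m \<and> \<not> cyclic_orbit Q1 Q2 C}"
  have "card C \<le> n" if "C \<in> orbits n Q1 Q2" for C
    using that component_subset card_mono[of "{1..n}"] unfolding orbits_eq by fastforce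
  then have "linear_orbits = (\<Union>m\<in>{2..n}. ?L m)" unfolding linear_orbits_def by auto
  moreover have "Lambda_ge n Q1 Q2 2 = (\<Sum>m\<in>{2..n}. card (?L m))"
    unfolding Lambda_ge_def Lambda_def ..
  moreover have "finite (orbits n Q1 Q2)" unfolding orbits_eq by simp
  then have "(\<Sum>m\<in>{2..n}. card (?L m)) = card (\<Union>m\<in>{2..n}. ?L m)"
    by (intro card_UN_disjoint[symmetric]) auto
  ultimately show ?thesis by simp
qed

theorem A_count_add_Lambda_ge: "A_count (Q1 \<union> Q2) + Lambda_ge n Q1 Q2 2 = card (symdiff Q1 Q2)"
  using double_card_symdiff card_junctions A_count_eq_card_touching_pairs card_ends Lambda_ge_2_eq
  by linarith

end

theorem mainTheorem11:
  fixes n :: nat and Q1 Q2 :: "nat set set"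
  assumes "n \<ge> 3"
    and "secondary_structure n Q1" and "secondary_structure n Q2"
  shows "d_m n 4 Q1 Q2 =
           real (card (symdiff Q1 Q2)) - 2 / real (n + 1) * real (A_count (Q1 \<union> Q2))
       \<and> d_m n 4 Q1 Q2 =
           real (card (symdiff Q1 Q2)) - 2 / real (n + 1) *
             (real (card (symdiff Q1 Q2)) - real (Lambda_ge n Q1 Q2 2))"
proof -
  interpret two_matchings n Q1 Q2
    using secondary_structureD assms(2,3) by unfold_locales blast+
  have "d_m n 4 Q1 Q2 = real (card (symdiff (edge_monoms n 4 Q1) (edge_monoms n 4 Q2))) / real (n + 1)"
    unfolding d_m_def using d'_m_eq_card_symdiff_edge_monoms[OF edges1 edges2] by simp
  also have "real (card (symdiff (edge_monoms n 4 Q1) (edge_monoms n 4 Q2)))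
      = real (n + 1) * real (card (symdiff Q1 Q2)) - 2 * real (A_count (Q1 \<union> Q2))"
    using arg_cong[OF card_symdiff_edge_monoms_4, of real] by (simp add: algebra_simps)
  finally have "d_m n 4 Q1 Q2 = real (card (symdiff Q1 Q2)) - 2 / real (n + 1) * real (A_count (Q1 \<union> Q2))"
    by (simp add: field_simps)
  moreover have "real (A_count (Q1 \<union> Q2)) = real (card (symdiff Q1 Q2)) - real (Lambda_ge n Q1 Q2 2)"
    using arg_cong[OF A_count_add_Lambda_ge, of real] by simp
  ultimately show ?thesis by simp
qed

end
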